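(* Let $n\geq2$ and $F\in{\sf Aut}(\mathbb L_n)$. If $F(0,z')=(0,z')$ for all $z'\in L_{n-1}$, then $F$ is the identity.
   Context: $L_m:=\{z\in\mathbb C^m:\|z\|<1,\ \sqrt{\|z\|^4-|\sum_jz_j^2|^2}<1-\|z\|^2\}$ with $\|z\|^2=\sum_j|z_j|^2$. $\Lambda_n(z)=(z_1^2,z_2,\dots,z_n)$ and $\mathbb L_n:=\Lambda_n(L_n)$; note $\{0\}\times L_{n-1}\subset\mathbb L_n$. ${\sf Aut}(\mathbb L_n)$ is the group of biholomorphic self-maps of $\mathbb L_n$. *)

theory Defs
  imports "HOL-Analysis.Analysis"
begin

(* Points of C^n are vectors complex^'n; the coordinate set I allows us to
   speak of the domain L_m on a subset of the coordinates (e.g. L_{n-1} on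
   the coordinates other than the distinguished first one). *)

definition sqnorm_on :: "'n::finite set \<Rightarrow> complex^'n \<Rightarrow> real" where
  "sqnorm_on I z = (\<Sum>j\<in>I. (cmod (z$j))^2)"

definition Lset_on :: "'n::finite set \<Rightarrow> (complex^'n) set" where
  "Lset_on I = {z. sqnorm_on I z < 1 \<and>
      sqrt ((sqnorm_on I z)^2 - (cmod (\<Sum>j\<in>I. (z$j)^2))^2) < 1 - sqnorm_on I z}"

definition Lam :: "'n::finite \<Rightarrow> complex^'n \<Rightarrow> complex^'n" where
  "Lam a0 z = (\<chi> j. if j = a0 then (z$j)^2 else z$j)"

definition LL :: "'n::finite \<Rightarrow> (complex^'n) set" where
  "LL a0 = Lam a0 ` Lset_on UNIV"

definition holo_on :: "(complex^'n::finite \<Rightarrow> complex^'m::finite) \<Rightarrow> (complex^'n) set \<Rightarrow> bool" where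
  "holo_on f S \<longleftrightarrow> (\<forall>z\<in>S. \<exists>f'. (f has_derivative f') (at z) \<and>
       (\<forall>c v. f' (c *s v) = c *s f' v))"

definition Aut :: "(complex^'n::finite) set \<Rightarrow> (complex^'n \<Rightarrow> complex^'n) set" where
  "Aut D = {F. holo_on F D \<and> F ` D \<subseteq> D \<and>
      (\<exists>G. holo_on G D \<and> G ` D \<subseteq> D \<and> (\<forall>z\<in>D. G (F z) = z \<and> F (G z) = z))}"

end

theory Submission
  imports Defs "HOL-Complex_Analysis.Cauchy_Integral_Formula"
begin

text \<open>
  Write \<open>R\<^sub>c w = (c\<^sup>2 w\<^sub>0, c w')\<close> (\<open>wscale a0 c\<close>), so that \<open>Lam a0 (c z) = R\<^sub>c (Lam a0 z)\<close>. The
  domain is \<open>{LL_gauge < 1}\<close> for a gauge with \<open>LL_gauge (R\<^sub>c w) = |c|\<^sup>2 LL_gauge w\<close>, so it is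
  invariant under \<open>R\<^sub>c\<close> for \<open>|c| \<le> 1\<close> and bounded.

  If a holomorphic self-map \<open>S\<close> fixes the hyperplane \<open>w\<^sub>0 = 0\<close> pointwise, then along the orbit
  \<open>\<zeta> \<mapsto> R\<^sub>\<zeta> u\<close> its \<open>j\<close>-th coordinate is \<open>\<zeta>\<^bsup>weight j\<^esup>\<close> times the \<open>j\<close>-th coordinate of
  \<open>(\<alpha> u\<^sub>0, u')\<close> up to \<open>o(\<zeta>\<^bsup>weight j\<^esup>)\<close>, where \<open>\<alpha> = \<partial>S\<^sub>0/\<partial>w\<^sub>0 (0)\<close>. For \<open>\<alpha> = 1\<close> a
  Cartan-type argument gives \<open>S = id\<close>: the first nonvanishing higher Taylor coefficient in \<open>\<zeta>\<close>
  would be multiplied by \<open>k\<close> under the iterate \<open>S\<^sup>k\<close>, against the Cauchy estimates for maps into a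
  bounded domain.

  For an automorphism \<open>F\<close> fixing the hyperplane, the commutator \<open>R\<^sub>c\<^sup>-\<^sup>1 F\<^sup>-\<^sup>1 R\<^sub>c F\<close> (\<open>|c| = 1\<close>)
  has \<open>\<alpha> = 1\<close>, so \<open>F\<close> commutes with the circle action. This forces \<open>F w = (\<alpha> w\<^sub>0, w')\<close>;
  comparing with \<open>F\<^sup>-\<^sup>1\<close> gives \<open>|\<alpha>| = 1\<close>, and \<open>\<alpha> = 1\<close> because a nontrivial rotation of
  \<open>w\<^sub>0\<close> does not preserve the domain once \<open>n \<ge> 2\<close>.
\<close>

section \<open>Taylor coefficients of bounded holomorphic functions\<close>

definition taylor_coeff :: "(complex \<Rightarrow> complex) \<Rightarrow> nat \<Rightarrow> complex" where
  "taylor_coeff f i = (deriv ^^ i) f 0 / fact i"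

lemma eventually_at_0I:
  assumes "0 < d" "\<And>x::'a::real_normed_vector. x \<noteq> 0 \<Longrightarrow> norm x < d \<Longrightarrow> P x"
  shows "eventually P (at 0)"
  unfolding eventually_at using assms by (auto simp: dist_norm)

lemma taylor_coeff_bound:
  assumes hol: "f holomorphic_on ball 0 R" and bd: "\<forall>z\<in>ball 0 R. norm (f z) \<le> B"
    and s: "0 < s" "s < R"
  shows "norm (taylor_coeff f i) \<le> B / s^i"
proof -
  have "norm ((deriv ^^ i) f 0) \<le> fact i * B / s^i"
  proof (rule Cauchy_inequality)
    show "f holomorphic_on ball 0 s" by (rule holomorphic_on_subset[OF hol]) (use s in auto)
    show "continuous_on (cball 0 s) f"
      by (rule continuous_on_subset[OF holomorphic_on_imp_continuous_on[OF hol]]) (use s in auto)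
    show "norm (f x) \<le> B" if "norm (0 - x) = s" for x using bd that s by auto
  qed (use s in auto)
  then show ?thesis unfolding taylor_coeff_def by (simp add: norm_divide field_simps)
qed

lemma taylor_remainder_bound:
  assumes hol: "f holomorphic_on ball 0 R" and bd: "\<forall>z\<in>ball 0 R. norm (f z) \<le> B"
    and s: "0 < s" "s < R" and z: "norm \<zeta> \<le> s/2"
  shows "norm (f \<zeta> - (\<Sum>i\<le>N. taylor_coeff f i * \<zeta>^i)) \<le> 2 * B * (norm \<zeta> / s)^(Suc N)"
proof -
  have zR: "\<zeta> \<in> ball 0 R" using z s by auto
  have B0: "0 \<le> B" using bd[rule_format, of 0] s by (auto intro: order_trans[OF norm_ge_zero])
  define q where "q = norm \<zeta> / s"
  have q: "0 \<le> q" "q \<le> 1/2" using z s unfolding q_def by (auto simp: field_simps)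
  have "(\<lambda>n. taylor_coeff f n * \<zeta>^n) sums f \<zeta>"
    using holomorphic_power_series[OF hol zR] unfolding taylor_coeff_def by simp
  then have tail: "(\<lambda>n. taylor_coeff f (n + Suc N) * \<zeta>^(n + Suc N)) sums
      (f \<zeta> - (\<Sum>i\<le>N. taylor_coeff f i * \<zeta>^i))"
    using sums_split_initial_segment[of _ "f \<zeta>" "Suc N"] unfolding lessThan_Suc_atMost by blast
  have term_bound: "norm (taylor_coeff f (n + Suc N) * \<zeta>^(n + Suc N)) \<le> B * q^(Suc N) * q^n" for n
  proof -
    have "norm (taylor_coeff f (n + Suc N) * \<zeta>^(n + Suc N)) \<le> B / s^(n + Suc N) * norm \<zeta>^(n + Suc N)"
      unfolding norm_mult norm_power
      by (intro mult_right_mono taylor_coeff_bound[OF hol bd s]) auto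
    also have "\<dots> = B * q^(Suc N) * q^n" unfolding q_def by (simp add: field_simps power_add power_divide)
    finally show ?thesis .
  qed
  have geo: "(\<lambda>n. B * q^(Suc N) * q^n) sums (B * q^(Suc N) * (1 / (1 - q)))"
    using geometric_sums[of q] q by (intro sums_mult) auto
  have summable: "summable (\<lambda>n. norm (taylor_coeff f (n + Suc N) * \<zeta>^(n + Suc N)))"
    by (rule summable_comparison_test'[OF sums_summable[OF geo]]) (use term_bound in auto)
  have "norm (f \<zeta> - (\<Sum>i\<le>N. taylor_coeff f i * \<zeta>^i))
      = norm (\<Sum>n. taylor_coeff f (n + Suc N) * \<zeta>^(n + Suc N))"
    using sums_unique[OF tail] by simp
  also have "\<dots> \<le> (\<Sum>n. norm (taylor_coeff f (n + Suc N) * \<zeta>^(n + Suc N)))"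
    by (rule summable_norm[OF summable])
  also have "\<dots> \<le> (\<Sum>n. B * q^(Suc N) * q^n)"
    by (rule suminf_le[OF term_bound summable sums_summable[OF geo]])
  also have "\<dots> = B * q^(Suc N) * (1 / (1 - q))" using sums_unique[OF geo] by simp
  also have "\<dots> \<le> B * q^(Suc N) * 2"
    using q B0 by (intro mult_left_mono) (auto simp: field_simps)
  finally show ?thesis unfolding q_def by (simp add: mult_ac)
qed

lemma poly_little_o_imp_coeffs_zero:
  fixes b :: "nat \<Rightarrow> complex"
  assumes lim: "((\<lambda>\<zeta>. (\<Sum>i\<le>N. b i * \<zeta>^i) / \<zeta>^N) \<longlongrightarrow> 0) (at 0)"
  shows "i \<le> N \<Longrightarrow> b i = 0"
proof (induction i rule: less_induct)
  case (less i)
  define P where "P \<zeta> = (\<Sum>l\<in>{i..N}. b l * \<zeta>^(l - i))" for \<zeta> :: complex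
  have factor: "(\<Sum>l\<le>N. b l * \<zeta>^l) = \<zeta>^i * P \<zeta>" for \<zeta>
  proof -
    have "(\<Sum>l\<le>N. b l * \<zeta>^l) = (\<Sum>l\<in>{i..N}. b l * \<zeta>^l)"
      using less by (intro sum.mono_neutral_right) auto
    also have "\<dots> = (\<Sum>l\<in>{i..N}. \<zeta>^i * (b l * \<zeta>^(l - i)))"
      by (intro sum.cong refl) (auto simp: power_add[symmetric] mult_ac)
    finally show ?thesis unfolding P_def by (simp add: sum_distrib_left)
  qed
  have "(P \<longlongrightarrow> P 0) (at 0)" unfolding P_def
    by (intro tendsto_intros continuous_intros)
  moreover have "P 0 = b i"
  proof -
    have "P 0 = (\<Sum>l\<in>{i..N}. if l = i then b l else 0)"
      unfolding P_def by (intro sum.cong refl) auto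
    then show ?thesis using less by simp
  qed
  moreover have "(P \<longlongrightarrow> 0) (at 0)"
  proof -
    have "((\<lambda>\<zeta>. (\<Sum>i\<le>N. b i * \<zeta>^i) / \<zeta>^N * \<zeta>^(N - i)) \<longlongrightarrow> 0 * 0^(N-i)) (at 0)"
      by (intro tendsto_intros lim)
    then have "((\<lambda>\<zeta>. (\<Sum>i\<le>N. b i * \<zeta>^i) / \<zeta>^N * \<zeta>^(N - i)) \<longlongrightarrow> 0) (at 0)"
      by simp
    moreover have "eventually (\<lambda>\<zeta>. (\<Sum>i\<le>N. b i * \<zeta>^i) / \<zeta>^N * \<zeta>^(N - i) = P \<zeta>) (at 0)"
    proof (rule eventually_at_0I[of 1])
      fix \<zeta> :: complex assume "\<zeta> \<noteq> 0"
      then show "(\<Sum>i\<le>N. b i * \<zeta>^i) / \<zeta>^N * \<zeta>^(N - i) = P \<zeta>"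
        using less(2) unfolding factor by (simp add: field_simps power_add[symmetric])
    qed simp
    ultimately show ?thesis by (rule Lim_transform_eventually)
  qed
  ultimately show ?case using tendsto_unique[OF at_neq_bot] by metis
qed

lemma taylor_coeff_eq_if_little_o:
  assumes hol: "f holomorphic_on ball 0 R" and bd: "\<forall>z\<in>ball 0 R. norm (f z) \<le> B" and R: "0 < R"
    and lim: "((\<lambda>\<zeta>. (f \<zeta> - (\<Sum>i\<le>N. p i * \<zeta>^i)) / \<zeta>^N) \<longlongrightarrow> 0) (at 0)"
    and i: "i \<le> N"
  shows "taylor_coeff f i = p i"
proof -
  define s where "s = R/2"
  have s: "0 < s" "s < R" using R unfolding s_def by auto
  have taylor_lim: "((\<lambda>\<zeta>. (f \<zeta> - (\<Sum>i\<le>N. taylor_coeff f i * \<zeta>^i)) / \<zeta>^N) \<longlongrightarrow> 0) (at 0)"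
  proof (rule Lim_null_comparison)
    show "eventually (\<lambda>\<zeta>. norm ((f \<zeta> - (\<Sum>i\<le>N. taylor_coeff f i * \<zeta>^i)) / \<zeta>^N)
        \<le> 2 * B / s^(Suc N) * norm \<zeta>) (at 0)"
    proof (rule eventually_at_0I[of "s/2"])
      fix \<zeta> :: complex assume z0: "\<zeta> \<noteq> 0" and z: "norm \<zeta> < s/2"
      have "norm (f \<zeta> - (\<Sum>i\<le>N. taylor_coeff f i * \<zeta>^i)) \<le> 2 * B * (norm \<zeta> / s)^(Suc N)"
        using taylor_remainder_bound[OF hol bd s, of \<zeta> N] z by simp
      also have "\<dots> = (2 * B / s^(Suc N) * norm \<zeta>) * norm \<zeta> ^ N"
        using s by (simp add: power_divide field_simps)
      finally show "norm ((f \<zeta> - (\<Sum>i\<le>N. taylor_coeff f i * \<zeta>^i)) / \<zeta>^N) \<le> 2 * B / s^(Suc N) * norm \<zeta>"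
        using z0 by (simp add: norm_divide norm_power pos_divide_le_eq)
    qed (use s in auto)
    show "((\<lambda>\<zeta>. 2 * B / s^(Suc N) * norm \<zeta>) \<longlongrightarrow> 0) (at 0)"
      using s by (auto intro!: tendsto_eq_intros)
  qed
  have "((\<lambda>\<zeta>. (\<Sum>i\<le>N. (taylor_coeff f i - p i) * \<zeta>^i) / \<zeta>^N) \<longlongrightarrow> 0 - 0) (at 0)"
  proof -
    have e: "(\<Sum>i\<le>N. (taylor_coeff f i - p i) * \<zeta>^i) / \<zeta>^N =
       (f \<zeta> - (\<Sum>i\<le>N. p i * \<zeta>^i)) / \<zeta>^N - (f \<zeta> - (\<Sum>i\<le>N. taylor_coeff f i * \<zeta>^i)) / \<zeta>^N" for \<zeta>
      by (simp add: diff_divide_distrib[symmetric] sum_subtractf algebra_simps)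
    show ?thesis unfolding e by (intro tendsto_diff lim taylor_lim)
  qed
  then show ?thesis using poly_little_o_imp_coeffs_zero[of "\<lambda>i. taylor_coeff f i - p i" N i] i by simp
qed

lemma sum_atMost_monomial:
  fixes x \<zeta> :: complex
  shows "(\<Sum>i\<le>b. (if i = b then x else 0) * \<zeta>^i) = x * \<zeta>^b"
proof -
  have "(\<Sum>i\<le>b. (if i = b then x else 0) * \<zeta>^i) = (\<Sum>i\<le>b. (if i = b then x * \<zeta>^b else 0))"
    by (intro sum.cong) auto
  then show ?thesis by simp
qed

lemma sum_atMost_two_monomials:
  fixes x y \<zeta> :: complex
  assumes "a < b"
  shows "(\<Sum>i\<le>b. (if i = a then x else if i = b then y else 0) * \<zeta>^i) = x * \<zeta>^a + y * \<zeta>^b"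
proof -
  have "(\<Sum>i\<le>b. (if i = a then x else if i = b then y else 0) * \<zeta>^i)
      = (\<Sum>i\<le>b. (if i = a then x * \<zeta>^a else 0) + (if i = b then y * \<zeta>^b else 0))"
    using assms by (intro sum.cong) auto
  also have "\<dots> = x * \<zeta>^a + y * \<zeta>^b" using assms by (simp add: sum.distrib)
  finally show ?thesis .
qed

lemma holomorphic_eq_monomial_if_taylor_coeffs_zero:
  assumes hol: "f holomorphic_on ball 0 \<rho>" and zero: "\<And>n. n \<noteq> m \<Longrightarrow> taylor_coeff f n = 0"
    and \<zeta>: "\<zeta> \<in> ball 0 \<rho>"
  shows "f \<zeta> = taylor_coeff f m * \<zeta>^m"
proof -
  have "(\<lambda>n. taylor_coeff f n * \<zeta>^n) sums f \<zeta>"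
    using holomorphic_power_series[OF hol \<zeta>] unfolding taylor_coeff_def by simp
  moreover have "taylor_coeff f n * \<zeta>^n = (if n = m then taylor_coeff f m * \<zeta>^m else 0)" for n
    using zero[of n] by auto
  ultimately have "(\<lambda>n. if n = m then taylor_coeff f m * \<zeta>^m else 0) sums f \<zeta>" by simp
  moreover have "(\<lambda>n. if n = m then taylor_coeff f m * \<zeta>^m else 0) sums (taylor_coeff f m * \<zeta>^m)"
    using sums_single[of m "\<lambda>_. taylor_coeff f m * \<zeta>^m"] by simp
  ultimately show ?thesis by (rule sums_unique2)
qed

lemma exists_unimodular_power_neq:
  assumes "n \<noteq> m"
  shows "\<exists>c::complex. cmod c = 1 \<and> c^n \<noteq> c^m"
proof -
  have *: "\<exists>c::complex. cmod c = 1 \<and> c^a \<noteq> c^b" if ab: "a < b" for a b :: nat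
  proof -
    define c where "c = exp (\<i> * of_real (pi / real (b - a)))"
    have c1: "cmod c = 1" unfolding c_def by simp
    have "c^(b - a) = exp (of_nat (b - a) * (\<i> * of_real (pi / real (b - a))))"
      unfolding c_def by (rule exp_of_nat_mult[symmetric])
    also have "of_nat (b - a) * (\<i> * of_real (pi / real (b - a))) = \<i> * of_real pi"
      using ab by (simp add: field_simps)
    finally have "c^(b - a) = -1" by simp
    moreover have "c^b = c^a * c^(b - a)" using ab by (simp add: power_add[symmetric])
    ultimately have "c^b = - (c^a)" by simp
    moreover have "c^a \<noteq> 0" using c1 by auto
    ultimately show ?thesis using c1 by (intro exI[of _ c]) auto
  qed
  from assms consider "n < m" | "m < n" by linarith
  then show ?thesis
  proof cases
    case 1 then show ?thesis using *[of n m] by blast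
  next
    case 2 then show ?thesis using *[of m n] by (metis (no_types))
  qed
qed

lemma taylor_coeff_homogeneous_eq_0:
  fixes f :: "complex \<Rightarrow> complex"
  assumes hol: "f holomorphic_on ball 0 \<rho>" and \<rho>: "\<rho> > 0"
    and homogeneous: "\<And>c \<zeta>. cmod c = 1 \<Longrightarrow> \<zeta> \<in> ball 0 \<rho> \<Longrightarrow> f (c * \<zeta>) = c^m * f \<zeta>"
    and nm: "n \<noteq> m"
  shows "taylor_coeff f n = 0"
proof -
  have ball: "open (ball (0::complex) \<rho>)" "(0::complex) \<in> ball 0 \<rho>" using \<rho> by auto
  obtain c :: complex where c: "cmod c = 1" "c^n \<noteq> c^m"
    using exists_unimodular_power_neq[OF nm] by blast
  have inb: "c * w \<in> ball 0 \<rho>" if "w \<in> ball 0 \<rho>" for w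
    using that c by (simp add: norm_mult)
  have "c^n * (deriv ^^ n) f 0 = (deriv ^^ n) (\<lambda>w. f (c * w)) 0"
    using higher_deriv_compose_linear[OF hol ball(1) ball(1) ball(2) inb, of n] by simp
  also have "\<dots> = (deriv ^^ n) (\<lambda>w. c^m * f w) 0"
  proof (rule higher_deriv_cong_ev)
    show "eventually (\<lambda>x. f (c * x) = c^m * f x) (nhds 0)"
      using eventually_nhds_in_open[OF ball] by (rule eventually_mono) (use homogeneous c in auto)
  qed simp
  also have "\<dots> = c^m * (deriv ^^ n) f 0"
    by (rule higher_deriv_cmult[OF hol ball(2) ball(1)])
  finally have "(c^n - c^m) * (deriv ^^ n) f 0 = 0" by (simp add: algebra_simps)
  then show ?thesis using c unfolding taylor_coeff_def by simp
qed

lemma homogeneous_holomorphic_eq_monomial: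
  fixes f :: "complex \<Rightarrow> complex"
  assumes hol: "f holomorphic_on ball 0 \<rho>"
    and homogeneous: "\<And>c \<zeta>. cmod c = 1 \<Longrightarrow> \<zeta> \<in> ball 0 \<rho> \<Longrightarrow> f (c * \<zeta>) = c^m * f \<zeta>"
    and lim: "((\<lambda>\<zeta>. (f \<zeta> - \<zeta>^m * v) / \<zeta>^m) \<longlongrightarrow> 0) (at 0)"
    and \<zeta>: "\<zeta> \<in> ball 0 \<rho>"
  shows "f \<zeta> = v * \<zeta>^m"
proof -
  have \<rho>: "\<rho> > 0" using \<zeta> norm_ge_zero[of \<zeta>] by (simp, linarith)
  have hol': "f holomorphic_on ball 0 (\<rho>/2)" by (rule holomorphic_on_subset[OF hol]) (use \<rho> in auto)
  have "cball 0 (\<rho>/2) \<subseteq> ball 0 \<rho>" using \<rho> by (auto simp: subset_iff)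
  then have cpt: "compact (f ` cball 0 (\<rho>/2))"
    by (intro compact_continuous_image continuous_on_subset[OF holomorphic_on_imp_continuous_on[OF hol]])
      auto
  obtain B where "\<forall>x\<in>f ` cball 0 (\<rho>/2). norm x \<le> B"
    using compact_imp_bounded[OF cpt] unfolding bounded_iff by blast
  then have bd: "\<forall>z\<in>ball 0 (\<rho>/2). cmod (f z) \<le> B" by auto
  have "((\<lambda>\<zeta>. (f \<zeta> - (\<Sum>i\<le>m. (if i = m then v else 0) * \<zeta>^i)) / \<zeta>^m) \<longlongrightarrow> 0) (at 0)"
    unfolding sum_atMost_monomial using lim by (simp add: mult.commute)
  from taylor_coeff_eq_if_little_o[OF hol' bd _ this, where i = m]
  have "taylor_coeff f m = v" using \<rho> by simp
  moreover have "f \<zeta> = taylor_coeff f m * \<zeta>^m"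
    by (rule holomorphic_eq_monomial_if_taylor_coeffs_zero[OF hol
          taylor_coeff_homogeneous_eq_0[OF hol \<rho> homogeneous] \<zeta>])
  ultimately show ?thesis by simp
qed

lemma deriv_diff_bound:
  assumes f: "f holomorphic_on ball 0 R" and g: "g holomorphic_on ball 0 R" and r: "0 < r" "r < R"
    and close: "\<And>\<mu>. cmod \<mu> = r \<Longrightarrow> cmod (f \<mu> - g \<mu>) \<le> \<epsilon>"
  shows "cmod (deriv f 0 - deriv g 0) \<le> \<epsilon> / r"
proof -
  have fg: "(\<lambda>\<mu>. f \<mu> - g \<mu>) holomorphic_on ball 0 R" using f g by (intro holomorphic_intros)
  have "norm ((deriv ^^ 1) (\<lambda>\<mu>. f \<mu> - g \<mu>) 0) \<le> fact 1 * \<epsilon> / r^1"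
  proof (rule Cauchy_inequality)
    show "(\<lambda>\<mu>. f \<mu> - g \<mu>) holomorphic_on ball 0 r" by (rule holomorphic_on_subset[OF fg]) (use r in auto)
    show "continuous_on (cball 0 r) (\<lambda>\<mu>. f \<mu> - g \<mu>)"
      by (rule continuous_on_subset[OF holomorphic_on_imp_continuous_on[OF fg]]) (use r in auto)
  qed (use r close in auto)
  moreover have "f field_differentiable at 0" "g field_differentiable at 0"
    using holomorphic_on_imp_differentiable_at[OF f] holomorphic_on_imp_differentiable_at[OF g] r
    by auto
  ultimately show ?thesis by simp
qed

section \<open>Holomorphic maps of several variables\<close>

lemma bounded_linear_vec_smult_left: "bounded_linear (\<lambda>h::complex. h *s (v::complex^'n::finite))"
proof -
  have "linear (\<lambda>h::complex. h *s v)"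
    by (intro linearI) (simp_all add: vec_eq_iff algebra_simps)
  then show ?thesis by (simp add: linear_conv_bounded_linear)
qed

lemma norm_axis: "norm (axis i (x::'a::real_normed_vector)) = norm x"
proof -
  have "(\<Sum>j\<in>UNIV. (norm (axis i x $ j))^2) = (\<Sum>j\<in>UNIV. if j = i then (norm x)^2 else 0)"
    by (intro sum.cong) (auto simp: axis_def)
  then show ?thesis unfolding norm_vec_def L2_set_def by simp
qed

lemma norm_vec_smult: "norm (c *s (v::'a::real_normed_field^'n::finite)) = norm c * norm v"
proof -
  have "(\<Sum>i\<in>UNIV. (norm ((c *s v) $ i))^2) = (norm c)^2 * (\<Sum>i\<in>UNIV. (norm (v $ i))^2)"
    by (simp add: norm_mult power_mult_distrib sum_distrib_left)
  then show ?thesis unfolding norm_vec_def L2_set_def by (simp add: real_sqrt_mult)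
qed

lemma smult_axis: "\<mu> *s axis i (1::'a::ring_1) = axis i \<mu>"
  by (simp add: vec_eq_iff axis_def)

lemma axis_has_derivative:
  "((\<lambda>\<mu>. axis i \<mu>) has_derivative (\<lambda>h. h *s axis i (1::complex))) (at \<mu>)"
proof -
  have "((\<lambda>\<mu>. \<mu> *s axis i 1) has_derivative (\<lambda>h. h *s axis i (1::complex))) (at \<mu>)"
    by (rule bounded_linear_imp_has_derivative[OF bounded_linear_vec_smult_left])
  then show ?thesis by (simp add: smult_axis)
qed

lemma axis_0 [simp]: "axis i 0 = 0"
  by (simp add: vec_eq_iff axis_def)

lemma has_derivative_vec_nthI:
  fixes f :: "'a::real_normed_vector \<Rightarrow> 'b::real_normed_vector^'n::finite"
  assumes "\<And>i. ((\<lambda>x. f x $ i) has_derivative (\<lambda>h. f' h $ i)) (at x)" "bounded_linear f'"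
  shows "(f has_derivative f') (at x)"
proof -
  have "((\<lambda>y. ((f y - f x) - f' (y - x)) /\<^sub>R norm (y - x)) \<longlongrightarrow> 0) (at x)"
  proof (rule vec_tendstoI)
    fix i
    have "((\<lambda>y. ((f y $ i - f x $ i) - f' (y - x) $ i) /\<^sub>R norm (y - x)) \<longlongrightarrow> 0) (at x)"
      using assms(1)[of i] unfolding has_derivative_at_within by simp
    then show "((\<lambda>y. (((f y - f x) - f' (y - x)) /\<^sub>R norm (y - x)) $ i) \<longlongrightarrow> 0 $ i) (at x)"
      by simp
  qed
  then show ?thesis using assms(2) unfolding has_derivative_at_within by simp
qed

lemma has_field_derivative_nth_comp:
  assumes S: "(S has_derivative S') (at (p \<zeta>))" and S': "\<forall>c v. S' (c *s v) = c *s S' v"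
    and p: "(p has_derivative (\<lambda>h. h *s v)) (at \<zeta>)"
  shows "((\<lambda>\<zeta>. S (p \<zeta>) $ j) has_field_derivative (S' v $ j)) (at \<zeta>)"
proof -
  have "((\<lambda>x. S (p x)) has_derivative (\<lambda>h. S' (h *s v))) (at \<zeta>)"
    using diff_chain_at[OF p S] by (simp add: o_def)
  then have "((\<lambda>x. S (p x) $ j) has_derivative (\<lambda>h. S' (h *s v) $ j)) (at \<zeta>)"
    by (rule bounded_linear.has_derivative[OF bounded_linear_vec_nth])
  moreover have "(\<lambda>h. S' (h *s v) $ j) = (*) (S' v $ j)"
    using S' by (auto simp: mult.commute)
  ultimately show ?thesis unfolding has_field_derivative_def by simp
qed

lemma holomorphic_on_nth_comp:
  assumes S: "holo_on S D" and p: "p ` A \<subseteq> D"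
    and p': "\<And>\<zeta>. \<zeta> \<in> A \<Longrightarrow> (p has_derivative (\<lambda>h. h *s p' \<zeta>)) (at \<zeta>)"
  shows "(\<lambda>\<zeta>. S (p \<zeta>) $ j) holomorphic_on A"
  unfolding holomorphic_on_def field_differentiable_def
proof
  fix \<zeta> assume \<zeta>: "\<zeta> \<in> A"
  obtain S' where S': "(S has_derivative S') (at (p \<zeta>))" "\<forall>c v. S' (c *s v) = c *s S' v"
    using S p \<zeta> unfolding holo_on_def by blast
  show "\<exists>d. ((\<lambda>\<zeta>. S (p \<zeta>) $ j) has_field_derivative d) (at \<zeta> within A)"
    using has_field_derivative_nth_comp[OF S' p'[OF \<zeta>]] by (blast intro: has_field_derivative_at_within)
qed

lemma holo_on_compose:
  assumes "holo_on f A" "holo_on g B" "f ` A \<subseteq> B"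
  shows "holo_on (\<lambda>x. g (f x)) A"
  unfolding holo_on_def
proof
  fix z assume z: "z \<in> A"
  obtain f' where f': "(f has_derivative f') (at z)" "\<forall>c v. f' (c *s v) = c *s f' v"
    using assms(1) z unfolding holo_on_def by blast
  obtain g' where g': "(g has_derivative g') (at (f z))" "\<forall>c v. g' (c *s v) = c *s g' v"
    using assms(2,3) z unfolding holo_on_def by blast
  have "((\<lambda>x. g (f x)) has_derivative (\<lambda>v. g' (f' v))) (at z)"
    using diff_chain_at[OF f'(1) g'(1)] by (simp add: o_def)
  then show "\<exists>F'. ((\<lambda>x. g (f x)) has_derivative F') (at z) \<and> (\<forall>c v. F' (c *s v) = c *s F' v)"
    using f'(2) g'(2) by auto
qed

lemma holo_on_linear:
  assumes "bounded_linear L" "\<And>c v. L (c *s v) = c *s L v"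
  shows "holo_on L A"
  unfolding holo_on_def using bounded_linear_imp_has_derivative[OF assms(1)] assms(2) by blast

lemma funpow_image_subset: "S ` D \<subseteq> D \<Longrightarrow> (S ^^ k) ` D \<subseteq> D"
  by (induction k) auto

lemma holo_on_funpow:
  assumes "holo_on S D" "S ` D \<subseteq> D"
  shows "holo_on (S ^^ k) D"
proof (induction k)
  case 0
  have "holo_on (\<lambda>x. x) D" by (rule holo_on_linear) (simp_all add: bounded_linear_ident)
  then show ?case by (simp add: id_def)
next
  case (Suc k)
  then show ?case
    using holo_on_compose[OF Suc assms(1) funpow_image_subset[OF assms(2)]] by (simp add: o_def)
qed

lemma holo_on_imp_continuous_on: "holo_on S D \<Longrightarrow> continuous_on D S"
  unfolding holo_on_def by (meson continuous_at_imp_continuous_on has_derivative_continuous)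

section \<open>The domain and its weighted circle action\<close>

definition weight :: "'n::finite \<Rightarrow> 'n \<Rightarrow> nat" where
  "weight a0 j = (if j = a0 then 2 else 1)"

definition wscale :: "'n::finite \<Rightarrow> complex \<Rightarrow> complex^'n \<Rightarrow> complex^'n" where
  "wscale a0 c z = (\<chi> j. c ^ weight a0 j * z$j)"

definition wscale_deriv :: "'n::finite \<Rightarrow> complex \<Rightarrow> complex^'n \<Rightarrow> complex^'n" where
  "wscale_deriv a0 c u = (\<chi> j. of_nat (weight a0 j) * c ^ (weight a0 j - 1) * u$j)"

definition hyperplane_part :: "'n::finite \<Rightarrow> complex^'n \<Rightarrow> complex^'n" where
  "hyperplane_part a0 u = (\<chi> j. if j = a0 then 0 else u$j)"

lemma wscale_nth [simp]: "wscale a0 c x $ j = c ^ weight a0 j * x$j"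
  unfolding wscale_def by simp

lemma wscale_mult: "wscale a0 c (wscale a0 d x) = wscale a0 (c * d) x"
  by (simp add: vec_eq_iff power_mult_distrib)

lemma wscale_zero_right [simp]: "wscale a0 c 0 = 0"
  by (simp add: vec_eq_iff)

lemma wscale_1 [simp]: "wscale a0 1 x = x"
  by (simp add: vec_eq_iff)

lemma wscale_0 [simp]: "wscale a0 0 x = 0"
  by (simp add: vec_eq_iff weight_def)

lemma wscale_inverse [simp]:
  assumes "c \<noteq> 0"
  shows "wscale a0 c (wscale a0 (inverse c) x) = x" and "wscale a0 (inverse c) (wscale a0 c x) = x"
  using assms by (simp_all add: wscale_mult)

lemma wscale_smult: "wscale a0 c (d *s v) = d *s wscale a0 c v"
  by (simp add: vec_eq_iff algebra_simps)

lemma bounded_linear_wscale: "bounded_linear (wscale a0 c)"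
proof -
  have "linear (wscale a0 c)"
    by (intro linearI) (simp_all add: vec_eq_iff algebra_simps)
  then show ?thesis by (simp add: linear_conv_bounded_linear)
qed

lemma holo_on_wscale: "holo_on (wscale a0 c) A"
  by (rule holo_on_linear[OF bounded_linear_wscale wscale_smult])

lemma wscale_has_derivative:
  "((\<lambda>\<zeta>. wscale a0 \<zeta> u) has_derivative (\<lambda>h. h *s wscale_deriv a0 \<zeta> u)) (at \<zeta>)"
proof (rule has_derivative_vec_nthI[OF _ bounded_linear_vec_smult_left])
  fix i
  have "((\<lambda>\<zeta>. \<zeta> ^ weight a0 i * u$i) has_field_derivative
      (of_nat (weight a0 i) * \<zeta> ^ (weight a0 i - 1) * u$i)) (at \<zeta>)"
    by (auto intro!: derivative_eq_intros)
  then show "((\<lambda>\<zeta>. wscale a0 \<zeta> u $ i) has_derivative (\<lambda>h. (h *s wscale_deriv a0 \<zeta> u) $ i)) (at \<zeta>)"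
    unfolding has_field_derivative_def wscale_deriv_def wscale_nth
    by (rule has_derivative_eq_rhs) (auto simp: fun_eq_iff mult.commute)
qed

lemma wscale_deriv_0: "wscale_deriv a0 0 u = hyperplane_part a0 u"
  by (simp add: vec_eq_iff wscale_deriv_def hyperplane_part_def weight_def)

lemma wscale_eq_hyperplane_part_plus_axis:
  "wscale a0 \<zeta> u = \<zeta> *s hyperplane_part a0 u + axis a0 (\<zeta>^2 * u$a0)"
  by (simp add: vec_eq_iff hyperplane_part_def axis_def weight_def)

lemma hyperplane_part_nth_a0 [simp]: "hyperplane_part a0 u $ a0 = 0"
  by (simp add: hyperplane_part_def)

text \<open>With \<open>w = Lam a0 z\<close> one has \<open>sqnorm_on UNIV z = LL_N a0 w\<close> and
  \<open>cmod (\<Sum>j. (z$j)^2) = LL_Q a0 w\<close>, so the two inequalities defining \<open>L_n\<close> combine into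
  \<open>LL_gauge a0 w < 1\<close>.\<close>

definition LL_N :: "'n::finite \<Rightarrow> complex^'n \<Rightarrow> real" where
  "LL_N a0 w = cmod (w$a0) + (\<Sum>j\<in>-{a0}. (cmod (w$j))^2)"

definition LL_Q :: "'n::finite \<Rightarrow> complex^'n \<Rightarrow> real" where
  "LL_Q a0 w = cmod (w$a0 + (\<Sum>j\<in>-{a0}. (w$j)^2))"

definition LL_gauge :: "'n::finite \<Rightarrow> complex^'n \<Rightarrow> real" where
  "LL_gauge a0 w = LL_N a0 w + sqrt ((LL_N a0 w)^2 - (LL_Q a0 w)^2)"

lemma LL_N_nonneg: "0 \<le> LL_N a0 w"
  unfolding LL_N_def by (intro add_nonneg_nonneg sum_nonneg) auto

lemma LL_Q_le_LL_N: "LL_Q a0 w \<le> LL_N a0 w"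
proof -
  have "LL_Q a0 w \<le> cmod (w$a0) + cmod (\<Sum>j\<in>-{a0}. (w$j)^2)"
    unfolding LL_Q_def by (rule norm_triangle_ineq)
  also have "cmod (\<Sum>j\<in>-{a0}. (w$j)^2) \<le> (\<Sum>j\<in>-{a0}. cmod ((w$j)^2))"
    by (rule norm_sum)
  finally show ?thesis unfolding LL_N_def by (simp add: norm_power)
qed

lemma LL_gauge_sqrt_nonneg: "0 \<le> sqrt ((LL_N a0 w)^2 - (LL_Q a0 w)^2)"
  using LL_Q_le_LL_N[of a0 w] by (simp add: LL_Q_def power_mono)

lemma LL_gauge_nonneg: "0 \<le> LL_gauge a0 w"
  unfolding LL_gauge_def using LL_N_nonneg LL_gauge_sqrt_nonneg by (rule add_nonneg_nonneg)

lemma LL_eq_gauge_less_1: "LL a0 = {w. LL_gauge a0 w < 1}"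
proof -
  have split: "(\<Sum>j\<in>UNIV. f j) = f a0 + (\<Sum>j\<in>-{a0}. f j)" for f :: "'a \<Rightarrow> 'b::comm_monoid_add"
    using sum.remove[of UNIV a0 f] by (simp add: Compl_eq_Diff_UNIV)
  have iff: "z \<in> Lset_on UNIV \<longleftrightarrow> LL_gauge a0 (Lam a0 z) < 1" for z
  proof -
    have N: "sqnorm_on UNIV z = LL_N a0 (Lam a0 z)"
      unfolding sqnorm_on_def LL_N_def Lam_def by (simp add: split norm_power)
    have Q: "cmod (\<Sum>j\<in>UNIV. (z$j)^2) = LL_Q a0 (Lam a0 z)"
      unfolding LL_Q_def Lam_def by (simp add: split)
    show ?thesis
      using LL_gauge_sqrt_nonneg[of a0 "Lam a0 z"] unfolding Lset_on_def LL_gauge_def mem_Collect_eq N Q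
      by argo
  qed
  show ?thesis
  proof (intro set_eqI iffI)
    fix w assume "w \<in> LL a0"
    then show "w \<in> {w. LL_gauge a0 w < 1}" using iff unfolding LL_def by auto
  next
    fix w assume w: "w \<in> {w. LL_gauge a0 w < 1}"
    define z where "z = (\<chi> j. if j = a0 then csqrt (w$a0) else w$j)"
    have "Lam a0 z = w" unfolding z_def Lam_def by (simp add: vec_eq_iff)
    then show "w \<in> LL a0" using w iff[of z] unfolding LL_def by auto
  qed
qed

lemma LL_gauge_wscale: "LL_gauge a0 (wscale a0 c w) = (cmod c)^2 * LL_gauge a0 w"
proof -
  have N: "LL_N a0 (wscale a0 c w) = (cmod c)^2 * LL_N a0 w"
    unfolding LL_N_def
    by (simp add: weight_def norm_mult norm_power sum_distrib_left power_mult_distrib distrib_left)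
  have "w$a0 * c^2 + (\<Sum>j\<in>-{a0}. (c * w$j)^2) = c^2 * (w$a0 + (\<Sum>j\<in>-{a0}. (w$j)^2))"
    by (simp add: power_mult_distrib sum_distrib_left algebra_simps)
  then have Q: "LL_Q a0 (wscale a0 c w) = (cmod c)^2 * LL_Q a0 w"
    unfolding LL_Q_def by (simp add: weight_def norm_mult norm_power mult.commute)
  have "((cmod c)^2 * LL_N a0 w)^2 - ((cmod c)^2 * LL_Q a0 w)^2
      = ((cmod c)^2)^2 * ((LL_N a0 w)^2 - (LL_Q a0 w)^2)"
    by (simp add: algebra_simps power_mult_distrib)
  then have "sqrt (((cmod c)^2 * LL_N a0 w)^2 - ((cmod c)^2 * LL_Q a0 w)^2)
      = (cmod c)^2 * sqrt ((LL_N a0 w)^2 - (LL_Q a0 w)^2)"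
    by (simp only: real_sqrt_mult real_sqrt_abs abs_power2 abs_norm_cancel)
  then show ?thesis unfolding LL_gauge_def N Q by (simp add: algebra_simps)
qed

lemma wscale_in_LL:
  assumes "w \<in> LL a0" "cmod c \<le> 1"
  shows "wscale a0 c w \<in> LL a0"
proof -
  have "(cmod c)^2 * LL_gauge a0 w \<le> 1 * LL_gauge a0 w"
    using assms(2) LL_gauge_nonneg by (intro mult_right_mono) (auto simp: power_le_one)
  then show ?thesis using assms(1) unfolding LL_eq_gauge_less_1 by (simp add: LL_gauge_wscale)
qed

lemma wscale_disc_in_LL:
  assumes "w \<in> LL a0"
  obtains \<rho> where "\<rho> > 1" "\<And>c. cmod c < \<rho> \<Longrightarrow> wscale a0 c w \<in> LL a0"
proof (cases "LL_gauge a0 w = 0")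
  case True
  then show ?thesis using that[of 2] unfolding LL_eq_gauge_less_1 by (simp add: LL_gauge_wscale)
next
  case False
  then have g: "0 < LL_gauge a0 w" "LL_gauge a0 w < 1"
    using assms LL_gauge_nonneg[of a0 w] unfolding LL_eq_gauge_less_1 by auto
  show ?thesis
  proof (rule that[of "sqrt (1 / LL_gauge a0 w)"])
    show "sqrt (1 / LL_gauge a0 w) > 1" using g by simp
    fix c assume "cmod c < sqrt (1 / LL_gauge a0 w)"
    then have "(cmod c)^2 < (sqrt (1 / LL_gauge a0 w))^2" by (intro power_strict_mono) auto
    then have "(cmod c)^2 < 1 / LL_gauge a0 w" using g by simp
    then show "wscale a0 c w \<in> LL a0" using g unfolding LL_eq_gauge_less_1 by (simp add: LL_gauge_wscale field_simps)
  qed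
qed

lemma open_LL: "open (LL a0)"
proof -
  have "continuous_on UNIV (LL_gauge a0)"
    unfolding LL_gauge_def LL_N_def LL_Q_def by (intro continuous_intros)
  then show ?thesis unfolding LL_eq_gauge_less_1
    by (intro open_Collect_less) (auto intro: continuous_intros)
qed

lemma zero_in_LL: "0 \<in> LL a0"
  unfolding LL_eq_gauge_less_1 LL_gauge_def LL_N_def LL_Q_def by simp

lemma LL_nth_norm_less_1:
  assumes "w \<in> LL a0"
  shows "cmod (w$j) < 1"
proof -
  have N: "LL_N a0 w < 1"
    using assms LL_gauge_sqrt_nonneg[of a0 w] unfolding LL_eq_gauge_less_1 LL_gauge_def mem_Collect_eq by linarith
  show ?thesis
  proof (cases "j = a0")
    case True
    have "cmod (w$a0) \<le> LL_N a0 w" unfolding LL_N_def by (intro add_increasing2 sum_nonneg) auto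
    then show ?thesis using N True by simp
  next
    case False
    have "(cmod (w$j))^2 \<le> (\<Sum>j\<in>-{a0}. (cmod (w$j))^2)"
      using False by (intro member_le_sum) auto
    then have "(cmod (w$j))^2 < 1" using N norm_ge_zero[of "w$a0"] unfolding LL_N_def by linarith
    then show ?thesis by (simp add: power_less_one_iff abs_square_less_1)
  qed
qed

lemma LL_hyperplane_iff:
  assumes "w$a0 = 0"
  shows "w \<in> LL a0 \<longleftrightarrow> w \<in> Lset_on (-{a0})"
proof -
  have N: "sqnorm_on (-{a0}) w = LL_N a0 w" and Q: "cmod (\<Sum>j\<in>-{a0}. (w$j)^2) = LL_Q a0 w"
    unfolding sqnorm_on_def LL_N_def LL_Q_def using assms by auto
  show ?thesis
    using LL_gauge_sqrt_nonneg[of a0 w] unfolding LL_eq_gauge_less_1 Lset_on_def LL_gauge_def mem_Collect_eq N Q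
    by argo
qed

lemma LL_gauge_axis: "LL_gauge a0 (axis a0 \<mu>) = cmod \<mu>"
  unfolding LL_gauge_def LL_N_def LL_Q_def by (simp add: axis_def)

lemma holomorphic_on_wscale_slice:
  assumes "holo_on T D" "\<And>\<zeta>. \<zeta> \<in> A \<Longrightarrow> wscale a0 \<zeta> u \<in> D"
  shows "(\<lambda>\<zeta>. T (wscale a0 \<zeta> u) $ j) holomorphic_on A"
  by (rule holomorphic_on_nth_comp[OF assms(1) _ wscale_has_derivative]) (use assms(2) in auto)

lemma LL_self_map_wscale_slice:
  assumes "holo_on T (LL a0)" "T ` LL a0 \<subseteq> LL a0" "u \<in> LL a0"
  shows "(\<lambda>\<zeta>. T (wscale a0 \<zeta> u) $ j) holomorphic_on ball 0 1"
    and "\<forall>\<zeta>\<in>ball 0 1. cmod (T (wscale a0 \<zeta> u) $ j) \<le> 1"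
proof -
  have in_LL: "wscale a0 \<zeta> u \<in> LL a0" if "\<zeta> \<in> ball 0 1" for \<zeta>
    using that assms(3) by (intro wscale_in_LL) auto
  show "(\<lambda>\<zeta>. T (wscale a0 \<zeta> u) $ j) holomorphic_on ball 0 1"
    by (rule holomorphic_on_wscale_slice[OF assms(1) in_LL])
  show "\<forall>\<zeta>\<in>ball 0 1. cmod (T (wscale a0 \<zeta> u) $ j) \<le> 1"
    using in_LL assms(2) LL_nth_norm_less_1 by (meson image_subset_iff less_imp_le)
qed

definition normal_stretch :: "'n::finite \<Rightarrow> complex \<Rightarrow> complex^'n \<Rightarrow> complex^'n" where
  "normal_stretch a0 \<alpha> u = (\<chi> j. if j = a0 then \<alpha> * u$j else u$j)"

lemma normal_stretch_1 [simp]: "normal_stretch a0 1 u = u"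
  by (simp add: vec_eq_iff normal_stretch_def)

lemma normal_stretch_axis [simp]: "normal_stretch a0 \<alpha> (axis a0 x) = axis a0 (\<alpha> * x)"
  by (simp add: vec_eq_iff normal_stretch_def axis_def)

lemma norm_le_1_if_normal_stretch_self_map:
  assumes "\<And>w. w \<in> LL a0 \<Longrightarrow> normal_stretch a0 \<alpha> w \<in> LL a0"
  shows "cmod \<alpha> \<le> 1"
proof (rule ccontr)
  assume "\<not> cmod \<alpha> \<le> 1"
  define t where "t = 1 / cmod \<alpha>"
  have t: "0 < t" "t < 1" "cmod \<alpha> * t = 1"
    unfolding t_def using \<open>\<not> cmod \<alpha> \<le> 1\<close> by (auto simp: divide_less_eq)
  have "axis a0 (of_real t) \<in> LL a0"
    unfolding LL_eq_gauge_less_1 mem_Collect_eq LL_gauge_axis norm_of_real using t by simp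
  from assms[OF this] have "axis a0 (\<alpha> * of_real t) \<in> LL a0" by simp
  then show False unfolding LL_eq_gauge_less_1 mem_Collect_eq LL_gauge_axis norm_mult norm_of_real using t by simp
qed

text \<open>Rotating the distinguished coordinate preserves \<open>LL_N\<close> but not \<open>LL_Q\<close>; at points with
  \<open>LL_N = 1/2\<close> membership in \<open>LL a0\<close> is decided by whether \<open>LL_Q \<noteq> 0\<close>.\<close>

lemma LL_test_points:
  fixes a0 j1 :: "'n::finite" and \<alpha> :: complex
  assumes j1: "j1 \<noteq> a0" and \<alpha>: "cmod \<alpha> = 1" "\<alpha> \<noteq> 1"
  shows "axis a0 (-(1/4) / \<alpha>) + axis j1 (1/2) \<in> LL a0"
    and "axis a0 (-(1/4)) + axis j1 (1/2) \<notin> LL a0"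
proof -
  have N: "LL_N a0 (axis a0 p + axis j1 q) = cmod p + (cmod q)^2"
    and Q: "LL_Q a0 (axis a0 p + axis j1 q) = cmod (p + q^2)" for p q
  proof -
    have "(\<Sum>j\<in>-{a0}. f ((axis a0 p + axis j1 q) $ j)) = f q" if "f 0 = 0" for f :: "complex \<Rightarrow> 'a::comm_monoid_add"
    proof -
      have "(\<Sum>j\<in>-{a0}. f ((axis a0 p + axis j1 q) $ j)) = (\<Sum>j\<in>-{a0}. if j = j1 then f q else 0)"
        using j1 that by (intro sum.cong refl) (auto simp: axis_def)
      then show ?thesis using j1 by simp
    qed
    from this[of "\<lambda>x. (cmod x)^2"] this[of "\<lambda>x. x^2"]
    show "LL_N a0 (axis a0 p + axis j1 q) = cmod p + (cmod q)^2"
      and "LL_Q a0 (axis a0 p + axis j1 q) = cmod (p + q^2)"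
      unfolding LL_N_def LL_Q_def using j1 by (simp_all add: axis_def)
  qed
  define Q\<alpha> where "Q\<alpha> = cmod (-(1/4) / \<alpha> + (1/2)^2)"
  have "-(1/4) / \<alpha> + (1/2)^2 \<noteq> 0"
  proof
    assume "-(1/4) / \<alpha> + (1/2)^2 = 0"
    then have "\<alpha> = 1" using \<alpha> by (auto simp: field_simps power2_eq_square)
    then show False using \<alpha> by simp
  qed
  then have "sqrt ((1/2)^2 - Q\<alpha>^2) < sqrt ((1/2)^2)"
    unfolding Q\<alpha>_def by (intro real_sqrt_less_mono) simp
  then have "sqrt ((1/2)^2 - Q\<alpha>^2) < 1/2" by simp
  moreover have N\<alpha>: "LL_N a0 (axis a0 (-(1/4) / \<alpha>) + axis j1 (1/2)) = 1/2"
    unfolding N using \<alpha> by (simp add: norm_divide power2_eq_square)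
  ultimately show "axis a0 (-(1/4) / \<alpha>) + axis j1 (1/2) \<in> LL a0"
    unfolding LL_eq_gauge_less_1 LL_gauge_def mem_Collect_eq Q Q\<alpha>_def[symmetric] N\<alpha> by linarith
  show "axis a0 (-(1/4)) + axis j1 (1/2) \<notin> LL a0"
    unfolding LL_eq_gauge_less_1 LL_gauge_def mem_Collect_eq N Q by (simp add: power2_eq_square real_sqrt_divide)
qed

lemma eq_1_if_normal_stretch_self_map:
  assumes j1: "j1 \<noteq> a0" and \<alpha>: "cmod \<alpha> = 1"
    and self_map: "\<And>w. w \<in> LL a0 \<Longrightarrow> normal_stretch a0 \<alpha> w \<in> LL a0"
  shows "\<alpha> = 1"
proof (rule ccontr)
  assume "\<alpha> \<noteq> 1"
  note test = LL_test_points[OF j1 \<alpha> this]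
  have "normal_stretch a0 \<alpha> (axis a0 (-(1/4) / \<alpha>) + axis j1 (1/2)) = axis a0 (-(1/4)) + axis j1 (1/2)"
    using j1 \<alpha> by (auto simp: vec_eq_iff axis_def normal_stretch_def)
  then show False using self_map[OF test(1)] test(2) by simp
qed

section \<open>Self-maps fixing the hyperplane\<close>

definition normal_deriv :: "'n::finite \<Rightarrow> (complex^'n \<Rightarrow> complex^'n) \<Rightarrow> complex" where
  "normal_deriv a0 S = deriv (\<lambda>\<mu>. S (axis a0 \<mu>) $ a0) 0"

lemma nth_of_hyperplane_preserving:
  fixes A :: "complex^'n::finite \<Rightarrow> complex^'n"
  assumes lin: "linear A" and C: "\<forall>c v. A (c *s v) = c *s A v"
    and preserves: "\<And>v. v$a0 = 0 \<Longrightarrow> A v $ a0 = 0"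
  shows "A x $ a0 = A (axis a0 1) $ a0 * x$a0"
proof -
  have "x = x$a0 *s axis a0 1 + hyperplane_part a0 x"
    by (simp add: vec_eq_iff hyperplane_part_def axis_def)
  then have "A x = x$a0 *s A (axis a0 1) + A (hyperplane_part a0 x)"
    using linear_add[OF lin] C by metis
  then show ?thesis using preserves[of "hyperplane_part a0 x"] by (simp add: mult.commute)
qed

lemma normal_deriv_eq:
  assumes S': "(S has_derivative S') (at 0)" "\<forall>c v. S' (c *s v) = c *s S' v"
  shows "normal_deriv a0 S = S' (axis a0 1) $ a0"
proof -
  have "(S has_derivative S') (at (axis a0 0))" using S'(1) by simp
  from has_field_derivative_nth_comp[OF this S'(2) axis_has_derivative]
  have "((\<lambda>\<mu>. S (axis a0 \<mu>) $ a0) has_field_derivative (S' (axis a0 1) $ a0)) (at 0)" .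
  then show ?thesis unfolding normal_deriv_def by (rule DERIV_imp_deriv)
qed

locale LL_hyperplane_map =
  fixes a0 :: "'n::finite" and S :: "complex^'n \<Rightarrow> complex^'n"
  assumes holo: "holo_on S (LL a0)"
    and self_map: "S ` LL a0 \<subseteq> LL a0"
    and fixes_hyperplane: "\<And>y. y \<in> LL a0 \<Longrightarrow> y$a0 = 0 \<Longrightarrow> S y = y"
begin

lemma map_0 [simp]: "S 0 = 0"
  using fixes_hyperplane[OF zero_in_LL] by simp

lemma deriv_fixes_hyperplane:
  assumes S': "(S has_derivative S') (at 0)" "\<forall>c v. S' (c *s v) = c *s S' v" and v: "v$a0 = 0"
  shows "S' v = v"
proof -
  obtain r where r: "r > 0" "ball 0 r \<subseteq> LL a0"
    using open_LL[of a0, unfolded open_contains_ball] zero_in_LL[of a0] by blast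
  have "S' v $ j = v $ j" for j
  proof -
    have "(S has_derivative S') (at (0 *s v))" using S'(1) by simp
    from has_field_derivative_nth_comp[OF this S'(2)
        bounded_linear_imp_has_derivative[OF bounded_linear_vec_smult_left]]
    have deriv_S: "((\<lambda>\<mu>. S (\<mu> *s v) $ j) has_field_derivative (S' v $ j)) (at 0)" .
    define A where "A = (\<lambda>\<mu>::complex. \<mu> *s v) -` ball 0 r"
    have A_open: "open A" unfolding A_def
      by (rule continuous_open_vimage[OF open_ball linear_continuous_at[OF bounded_linear_vec_smult_left]])
    have A0: "0 \<in> A" using r unfolding A_def by simp
    have A_eq: "\<mu> * v $ j = S (\<mu> *s v) $ j" if "\<mu> \<in> A" for \<mu>
    proof -
      have "\<mu> *s v \<in> LL a0" using that r unfolding A_def by auto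
      then show ?thesis using fixes_hyperplane v by simp
    qed
    have "((\<lambda>\<mu>. \<mu> * v $ j) has_field_derivative (v $ j)) (at 0)"
      by (auto intro!: derivative_eq_intros)
    from has_field_derivative_transform_within_open[OF this A_open A0 A_eq]
    show ?thesis by (rule DERIV_unique[OF deriv_S])
  qed
  then show ?thesis by (simp add: vec_eq_iff)
qed

lemma deriv_nth_a0:
  assumes S': "(S has_derivative S') (at 0)" "\<forall>c v. S' (c *s v) = c *s S' v"
  shows "S' x $ a0 = normal_deriv a0 S * x$a0"
proof -
  have lin: "linear S'" using has_derivative_bounded_linear[OF S'(1)] by (rule bounded_linear.linear)
  have preserves: "S' v $ a0 = 0" if "v$a0 = 0" for v
    using deriv_fixes_hyperplane[OF S' that] that by simp
  from nth_of_hyperplane_preserving[OF lin S'(2) preserves] show ?thesis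
    unfolding normal_deriv_eq[OF S'] .
qed

lemma tangential_expansion:
  assumes j: "j \<noteq> a0"
  shows "((\<lambda>\<zeta>. (S (wscale a0 \<zeta> u) $ j - \<zeta> * u$j) / \<zeta>) \<longlongrightarrow> 0) (at 0)"
proof -
  obtain S' where S': "(S has_derivative S') (at 0)" "\<forall>c v. S' (c *s v) = c *s S' v"
    using holo zero_in_LL unfolding holo_on_def by blast
  have "(S has_derivative S') (at (wscale a0 0 u))" using S'(1) by simp
  from has_field_derivative_nth_comp[OF this S'(2) wscale_has_derivative]
  have "((\<lambda>\<zeta>. S (wscale a0 \<zeta> u) $ j) has_field_derivative (S' (wscale_deriv a0 0 u) $ j)) (at 0)" .
  moreover have "S' (wscale_deriv a0 0 u) = hyperplane_part a0 u"
    unfolding wscale_deriv_0 by (rule deriv_fixes_hyperplane[OF S']) simp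
  ultimately have "((\<lambda>\<zeta>. (S (wscale a0 \<zeta> u) $ j - 0) / \<zeta>) \<longlongrightarrow> u $ j) (at 0)"
    using j unfolding DERIV_def by (simp add: hyperplane_part_def)
  then have "((\<lambda>\<zeta>. (S (wscale a0 \<zeta> u) $ j - 0) / \<zeta> - u $ j) \<longlongrightarrow> u $ j - u $ j) (at 0)"
    by (intro tendsto_diff) auto
  moreover have "eventually (\<lambda>\<zeta>. (S (wscale a0 \<zeta> u) $ j - 0) / \<zeta> - u $ j
      = (S (wscale a0 \<zeta> u) $ j - \<zeta> * u$j) / \<zeta>) (at 0)"
    by (rule eventually_at_0I[of 1]) (auto simp: field_simps)
  ultimately show ?thesis using Lim_transform_eventually by fastforce
qed

text \<open>Along \<open>R\<^sub>\<zeta> u = \<zeta> u' + \<zeta>\<^sup>2 u\<^sub>0 e\<^sub>0\<close> the normal coordinate is only \<open>O(\<zeta>\<^sup>2)\<close>, so first-order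
  differentiability of \<open>S\<close> at \<open>0\<close> is not enough for \<open>normal_expansion\<close>: we need
  \<open>S (y + \<mu> e\<^sub>0)\<^sub>0 = (normal_deriv a0 S + o(1)) \<mu>\<close> uniformly for small \<open>y\<close> in the hyperplane.\<close>

definition normal_slice :: "complex^'n \<Rightarrow> complex \<Rightarrow> complex" where
  "normal_slice y \<mu> = S (y + axis a0 \<mu>) $ a0"

lemma deriv_normal_slice_0: "deriv (normal_slice 0) 0 = normal_deriv a0 S"
  unfolding normal_slice_def normal_deriv_def by simp

context
  fixes r :: real
  assumes r: "0 < r" and cball_in_LL: "cball 0 (3*r) \<subseteq> LL a0"
begin

lemma normal_slice_domain:
  assumes "norm y \<le> r" "cmod \<mu> \<le> 2*r"
  shows "y + axis a0 \<mu> \<in> cball 0 (3*r)"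
  using norm_triangle_ineq[of y "axis a0 \<mu>"] assms by (simp add: norm_axis)

lemma normal_slice_holomorphic:
  assumes "norm y \<le> r"
  shows "normal_slice y holomorphic_on ball 0 (2*r)"
  unfolding normal_slice_def
proof (rule holomorphic_on_nth_comp[OF holo])
  show "(\<lambda>\<mu>. y + axis a0 \<mu>) ` ball 0 (2*r) \<subseteq> LL a0"
    using normal_slice_domain[OF assms] cball_in_LL by fastforce
  show "((\<lambda>\<mu>. y + axis a0 \<mu>) has_derivative (\<lambda>h. h *s axis a0 1)) (at \<mu>)" for \<mu>
    using has_derivative_add[OF has_derivative_const axis_has_derivative] by simp
qed

lemma normal_slice_bounded:
  assumes "norm y \<le> r"
  shows "\<forall>\<mu>\<in>ball 0 (2*r). cmod (normal_slice y \<mu>) \<le> 1"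
proof
  fix \<mu> :: complex assume "\<mu> \<in> ball 0 (2*r)"
  then have "S (y + axis a0 \<mu>) \<in> LL a0"
    using normal_slice_domain[OF assms] cball_in_LL self_map by fastforce
  then show "cmod (normal_slice y \<mu>) \<le> 1"
    unfolding normal_slice_def using LL_nth_norm_less_1 less_imp_le by blast
qed

lemma normal_slice_quadratic:
  assumes y: "y$a0 = 0" "norm y \<le> r" and \<mu>: "cmod \<mu> \<le> r/2"
  shows "cmod (normal_slice y \<mu> - deriv (normal_slice y) 0 * \<mu>) \<le> 2 * (cmod \<mu> / r)^2"
proof -
  have "y \<in> LL a0" using normal_slice_domain[of y 0] y(2) r cball_in_LL by auto
  then have "normal_slice y 0 = 0" using fixes_hyperplane y(1) unfolding normal_slice_def by simp
  then have "(\<Sum>i\<le>1. taylor_coeff (normal_slice y) i * \<mu>^i) = deriv (normal_slice y) 0 * \<mu>"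
    unfolding taylor_coeff_def by simp
  moreover have "cmod (normal_slice y \<mu> - (\<Sum>i\<le>1. taylor_coeff (normal_slice y) i * \<mu>^i))
      \<le> 2 * 1 * (cmod \<mu> / r)^(Suc 1)"
    by (rule taylor_remainder_bound[OF normal_slice_holomorphic[OF y(2)] normal_slice_bounded[OF y(2)]])
      (use r \<mu> in auto)
  ultimately show ?thesis by (simp add: power_divide power2_eq_square)
qed

text \<open>Uniform continuity of \<open>S\<close> makes the slices uniformly close on a circle, and the Cauchy
  estimate transfers this to their derivatives at \<open>0\<close>.\<close>

lemma deriv_normal_slice_continuous:
  assumes \<epsilon>: "\<epsilon> > 0"
  obtains \<delta> where "\<delta> > 0"
    "\<And>y. y$a0 = 0 \<Longrightarrow> norm y < \<delta> \<Longrightarrow> cmod (deriv (normal_slice y) 0 - normal_deriv a0 S) \<le> \<epsilon>"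
proof -
  have "uniformly_continuous_on (cball 0 (3*r)) S"
    using continuous_on_subset[OF holo_on_imp_continuous_on[OF holo] cball_in_LL]
    by (intro compact_uniformly_continuous) auto
  then obtain \<delta>0 where \<delta>0: "\<delta>0 > 0"
    "\<And>x x'. x \<in> cball 0 (3*r) \<Longrightarrow> x' \<in> cball 0 (3*r) \<Longrightarrow> dist x' x < \<delta>0 \<Longrightarrow> dist (S x') (S x) < \<epsilon> * r"
    unfolding uniformly_continuous_on_def using \<epsilon> r by (metis mult_pos_pos)
  show ?thesis
  proof (rule that[of "min \<delta>0 r"])
    show "min \<delta>0 r > 0" using \<delta>0 r by simp
    fix y :: "complex^'n" assume y: "y$a0 = 0" "norm y < min \<delta>0 r"
    have "cmod (deriv (normal_slice y) 0 - deriv (normal_slice 0) 0) \<le> (\<epsilon> * r) / r"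
    proof (rule deriv_diff_bound)
      show "normal_slice y holomorphic_on ball 0 (2*r)" "normal_slice 0 holomorphic_on ball 0 (2*r)"
        using y r by (auto intro: normal_slice_holomorphic)
      fix \<mu> :: complex assume "cmod \<mu> = r"
      then have "y + axis a0 \<mu> \<in> cball 0 (3*r)" "0 + axis a0 \<mu> \<in> cball 0 (3*r)"
        using normal_slice_domain[of y \<mu>] normal_slice_domain[of 0 \<mu>] y r by simp_all
      moreover have "dist (y + axis a0 \<mu>) (0 + axis a0 \<mu>) < \<delta>0" using y by (simp add: dist_norm)
      ultimately have "dist (S (y + axis a0 \<mu>)) (S (0 + axis a0 \<mu>)) < \<epsilon> * r"
        by (intro \<delta>0(2))
      then have "norm (S (y + axis a0 \<mu>) - S (0 + axis a0 \<mu>)) \<le> \<epsilon> * r"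
        by (simp add: dist_norm)
      then show "cmod (normal_slice y \<mu> - normal_slice 0 \<mu>) \<le> \<epsilon> * r"
        unfolding normal_slice_def
        using Finite_Cartesian_Product.norm_nth_le[of "S (y + axis a0 \<mu>) - S (0 + axis a0 \<mu>)" a0] by simp
    qed (use r in auto)
    then show "cmod (deriv (normal_slice y) 0 - normal_deriv a0 S) \<le> \<epsilon>"
      using r by (simp add: deriv_normal_slice_0)
  qed
qed

end

lemma normal_slice_estimate:
  assumes \<epsilon>: "\<epsilon> > 0"
  obtains \<delta> where "\<delta> > 0" "\<And>y \<mu>. y$a0 = 0 \<Longrightarrow> norm y < \<delta> \<Longrightarrow> cmod \<mu> < \<delta> \<Longrightarrow>
    cmod (normal_slice y \<mu> - normal_deriv a0 S * \<mu>) \<le> \<epsilon> * cmod \<mu>"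
proof -
  obtain r0 where r0: "r0 > 0" "cball 0 r0 \<subseteq> LL a0"
    using open_LL[of a0, unfolded open_contains_cball] zero_in_LL[of a0] by blast
  define r where "r = r0 / 3"
  have r: "r > 0" "cball 0 (3*r) \<subseteq> LL a0" using r0 unfolding r_def by auto
  obtain \<delta>1 where \<delta>1: "\<delta>1 > 0"
    "\<And>y. y$a0 = 0 \<Longrightarrow> norm y < \<delta>1 \<Longrightarrow> cmod (deriv (normal_slice y) 0 - normal_deriv a0 S) \<le> \<epsilon>/2"
    using deriv_normal_slice_continuous[OF r, of "\<epsilon>/2"] \<epsilon> by auto
  define \<delta> where "\<delta> = min (min \<delta>1 (r/2)) (\<epsilon> * r^2 / 4)"
  show ?thesis
  proof (rule that[of \<delta>])
    show "\<delta> > 0" using \<delta>1 r \<epsilon> unfolding \<delta>_def by simp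
    fix y :: "complex^'n" and \<mu> :: complex
    assume y: "y$a0 = 0" "norm y < \<delta>" and \<mu>: "cmod \<mu> < \<delta>"
    have small: "norm y \<le> r" "norm y < \<delta>1" "cmod \<mu> \<le> r/2" "2 * cmod \<mu> \<le> \<epsilon> * r^2 / 2"
      using y \<mu> r unfolding \<delta>_def by auto
    have "normal_slice y \<mu> - normal_deriv a0 S * \<mu>
        = (normal_slice y \<mu> - deriv (normal_slice y) 0 * \<mu>) + (deriv (normal_slice y) 0 - normal_deriv a0 S) * \<mu>"
      by (simp add: algebra_simps)
    then have "cmod (normal_slice y \<mu> - normal_deriv a0 S * \<mu>)
        \<le> cmod (normal_slice y \<mu> - deriv (normal_slice y) 0 * \<mu>)
          + cmod (deriv (normal_slice y) 0 - normal_deriv a0 S) * cmod \<mu>"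
      by (metis norm_mult norm_triangle_ineq)
    also have "\<dots> \<le> 2 * (cmod \<mu> / r)^2 + \<epsilon>/2 * cmod \<mu>"
      using normal_slice_quadratic[OF r y(1) small(1,3)] \<delta>1(2)[OF y(1) small(2)]
      by (intro add_mono mult_right_mono) auto
    also have "2 * (cmod \<mu> / r)^2 \<le> \<epsilon>/2 * cmod \<mu>"
    proof -
      have "2 * cmod \<mu> * cmod \<mu> \<le> \<epsilon> * r^2 / 2 * cmod \<mu>"
        by (rule mult_right_mono[OF small(4) norm_ge_zero])
      then show ?thesis using r by (simp add: power_divide field_simps power2_eq_square)
    qed
    finally show "cmod (normal_slice y \<mu> - normal_deriv a0 S * \<mu>) \<le> \<epsilon> * cmod \<mu>" by simp
  qed
qed

lemma normal_expansion:
  "((\<lambda>\<zeta>. (S (wscale a0 \<zeta> u) $ a0 - \<zeta>^2 * (normal_deriv a0 S * u$a0)) / \<zeta>^2) \<longlongrightarrow> 0) (at 0)"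
proof (rule tendstoI)
  fix \<epsilon> :: real assume \<epsilon>: "\<epsilon> > 0"
  define \<epsilon>' where "\<epsilon>' = \<epsilon> / (2 * (cmod (u$a0) + 1))"
  have \<epsilon>': "\<epsilon>' > 0" "\<epsilon>' * cmod (u$a0) < \<epsilon>"
    using \<epsilon> unfolding \<epsilon>'_def by (auto simp: field_simps add_pos_nonneg)
  obtain \<delta> where \<delta>: "\<delta> > 0" "\<And>y \<mu>. y$a0 = 0 \<Longrightarrow> norm y < \<delta> \<Longrightarrow> cmod \<mu> < \<delta> \<Longrightarrow>
    cmod (normal_slice y \<mu> - normal_deriv a0 S * \<mu>) \<le> \<epsilon>' * cmod \<mu>"
    using normal_slice_estimate[OF \<epsilon>'(1)] by blast
  define K where "K = norm (hyperplane_part a0 u) + cmod (u$a0) + 1"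
  have K: "K \<ge> 1" "norm (hyperplane_part a0 u) \<le> K" "cmod (u$a0) \<le> K" unfolding K_def by auto
  show "eventually (\<lambda>\<zeta>. dist ((S (wscale a0 \<zeta> u) $ a0 - \<zeta>^2 * (normal_deriv a0 S * u$a0)) / \<zeta>^2) 0 < \<epsilon>) (at 0)"
  proof (rule eventually_at_0I[of "min 1 (\<delta> / K)"])
    show "0 < min 1 (\<delta> / K)" using \<delta> K by simp
    fix \<zeta> :: complex assume \<zeta>: "\<zeta> \<noteq> 0" "norm \<zeta> < min 1 (\<delta> / K)"
    then have \<zeta>K: "cmod \<zeta> * K < \<delta>" using K by (simp add: field_simps)
    have y: "norm (\<zeta> *s hyperplane_part a0 u) < \<delta>"
      using mult_left_mono[OF K(2), of "cmod \<zeta>"] \<zeta>K by (simp add: norm_vec_smult)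
    have "cmod \<zeta> * cmod (u$a0) \<le> 1 * K" using \<zeta> K(3) by (intro mult_mono) auto
    from mult_left_mono[OF this, of "cmod \<zeta>"]
    have "cmod (\<zeta>^2 * u$a0) \<le> cmod \<zeta> * K" by (simp add: norm_mult norm_power power2_eq_square mult.assoc)
    then have \<mu>: "cmod (\<zeta>^2 * u$a0) < \<delta>" using \<zeta>K by linarith
    have "S (wscale a0 \<zeta> u) $ a0 = normal_slice (\<zeta> *s hyperplane_part a0 u) (\<zeta>^2 * u$a0)"
      unfolding normal_slice_def wscale_eq_hyperplane_part_plus_axis ..
    then have "cmod (S (wscale a0 \<zeta> u) $ a0 - \<zeta>^2 * (normal_deriv a0 S * u$a0)) \<le> \<epsilon>' * cmod (\<zeta>^2 * u$a0)"
      using \<delta>(2)[OF _ y \<mu>] by (simp add: mult_ac)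
    then have "cmod ((S (wscale a0 \<zeta> u) $ a0 - \<zeta>^2 * (normal_deriv a0 S * u$a0)) / \<zeta>^2) \<le> \<epsilon>' * cmod (u$a0)"
      using \<zeta>(1) by (simp add: norm_divide norm_mult norm_power divide_le_eq mult_ac)
    then show "dist ((S (wscale a0 \<zeta> u) $ a0 - \<zeta>^2 * (normal_deriv a0 S * u$a0)) / \<zeta>^2) 0 < \<epsilon>"
      using \<epsilon>'(2) by simp
  qed
qed

lemma wscale_expansion:
  "((\<lambda>\<zeta>. (S (wscale a0 \<zeta> u) $ j - \<zeta>^weight a0 j * normal_stretch a0 (normal_deriv a0 S) u $ j)
      / \<zeta>^weight a0 j) \<longlongrightarrow> 0) (at 0)"
proof (cases "j = a0")
  case True
  have "weight a0 j = 2" "normal_stretch a0 (normal_deriv a0 S) u $ j = normal_deriv a0 S * u$a0"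
    using True by (simp_all add: weight_def normal_stretch_def)
  then show ?thesis using normal_expansion[of u] True by (simp only:)
next
  case False
  have "weight a0 j = 1" "normal_stretch a0 (normal_deriv a0 S) u $ j = u$j"
    using False by (simp_all add: weight_def normal_stretch_def)
  then show ?thesis using tangential_expansion[OF False, of u] by (simp only: power_one_right)
qed

end

section \<open>A Cartan uniqueness theorem\<close>

locale LL_cartan_map =
  fixes a0 :: "'n::finite" and S :: "complex^'n \<Rightarrow> complex^'n"
  assumes holo: "holo_on S (LL a0)"
    and self_map: "S ` LL a0 \<subseteq> LL a0"
    and expansion: "\<And>u j. u \<in> LL a0 \<Longrightarrow>
       ((\<lambda>\<zeta>. (S (wscale a0 \<zeta> u) $ j - \<zeta>^weight a0 j * u$j) / \<zeta>^weight a0 j) \<longlongrightarrow> 0) (at 0)"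
begin

definition slice :: "complex^'n \<Rightarrow> 'n \<Rightarrow> complex \<Rightarrow> complex" where
  "slice u j \<zeta> = S (wscale a0 \<zeta> u) $ j"

definition excess_coeff :: "complex^'n \<Rightarrow> 'n \<Rightarrow> nat \<Rightarrow> complex" where
  "excess_coeff u j m = taylor_coeff (slice u j) (m + weight a0 j)"

lemma slice_holomorphic: "u \<in> LL a0 \<Longrightarrow> slice u j holomorphic_on ball 0 1"
  and slice_bounded: "u \<in> LL a0 \<Longrightarrow> \<forall>\<zeta>\<in>ball 0 1. cmod (slice u j \<zeta>) \<le> 1"
  unfolding slice_def using LL_self_map_wscale_slice[OF holo self_map] by blast+

lemma taylor_coeff_slice_low:
  assumes u: "u \<in> LL a0" and i: "i \<le> weight a0 j"
  shows "taylor_coeff (slice u j) i = (if i = weight a0 j then u$j else 0)"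
proof (rule taylor_coeff_eq_if_little_o[OF slice_holomorphic[OF u] slice_bounded[OF u] _ _ i])
  show "((\<lambda>\<zeta>. (slice u j \<zeta> - (\<Sum>i\<le>weight a0 j. (if i = weight a0 j then u$j else 0) * \<zeta>^i))
      / \<zeta>^(weight a0 j)) \<longlongrightarrow> 0) (at 0)"
    unfolding sum_atMost_monomial slice_def using expansion[OF u, of j] by (simp add: mult.commute)
qed simp

lemma identity_if_no_excess:
  assumes no_excess: "\<And>u j m. u \<in> LL a0 \<Longrightarrow> 1 \<le> m \<Longrightarrow> excess_coeff u j m = 0" and w: "w \<in> LL a0"
  shows "S w = w"
proof -
  obtain \<rho> where \<rho>: "\<rho> > 1" "\<And>c. cmod c < \<rho> \<Longrightarrow> wscale a0 c w \<in> LL a0"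
    using wscale_disc_in_LL[OF w] by blast
  have "S w $ j = w $ j" for j
  proof -
    have hol: "slice w j holomorphic_on ball 0 \<rho>"
      unfolding slice_def by (rule holomorphic_on_wscale_slice[OF holo]) (use \<rho> in auto)
    have "taylor_coeff (slice w j) n = 0" if "n \<noteq> weight a0 j" for n
    proof (cases "n < weight a0 j")
      case True then show ?thesis using taylor_coeff_slice_low[OF w, of n j] that by simp
    next
      case False
      then have "n = (n - weight a0 j) + weight a0 j" "1 \<le> n - weight a0 j" using that by auto
      then show ?thesis using no_excess[OF w, of "n - weight a0 j" j] unfolding excess_coeff_def by metis
    qed
    from holomorphic_eq_monomial_if_taylor_coeffs_zero[OF hol this, where \<zeta> = 1]
    show ?thesis using \<rho> taylor_coeff_slice_low[OF w order.refl, of j] unfolding slice_def by simp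
  qed
  then show ?thesis by (simp add: vec_eq_iff)
qed

context
  fixes d :: nat
  assumes d_pos: "1 \<le> d"
    and below_d: "\<And>u j m. u \<in> LL a0 \<Longrightarrow> 1 \<le> m \<Longrightarrow> m < d \<Longrightarrow> excess_coeff u j m = 0"
begin

lemma taylor_coeff_slice_upto:
  assumes u: "u \<in> LL a0" and i: "i \<le> d + weight a0 j"
  shows "taylor_coeff (slice u j) i =
    (if i = weight a0 j then u$j else if i = d + weight a0 j then excess_coeff u j d else 0)"
proof (cases "i \<le> weight a0 j")
  case True
  then have "i \<noteq> d + weight a0 j" using d_pos by simp
  then show ?thesis using taylor_coeff_slice_low[OF u True] by simp
next
  case False
  then have m: "i = (i - weight a0 j) + weight a0 j" "1 \<le> i - weight a0 j" by auto
  show ?thesis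
  proof (cases "i - weight a0 j < d")
    case True then show ?thesis using below_d[OF u m(2) True, of j] m False unfolding excess_coeff_def by auto
  next
    case False then have "i = d + weight a0 j" using i m by auto
    then show ?thesis using d_pos unfolding excess_coeff_def by auto
  qed
qed

lemma slice_remainder_bound:
  assumes u: "u \<in> LL a0" and \<zeta>: "cmod \<zeta> \<le> 1/4"
  shows "cmod (slice u j \<zeta> - \<zeta>^weight a0 j * u$j - \<zeta>^(d + weight a0 j) * excess_coeff u j d)
    \<le> 2^(d + weight a0 j + 2) * cmod \<zeta> * cmod \<zeta> ^ (d + weight a0 j)"
proof -
  define N where "N = d + weight a0 j"
  have "(\<Sum>i\<le>N. taylor_coeff (slice u j) i * \<zeta>^i)
      = (\<Sum>i\<le>N. (if i = weight a0 j then u$j else if i = N then excess_coeff u j d else 0) * \<zeta>^i)"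
    unfolding N_def by (intro sum.cong refl) (simp add: taylor_coeff_slice_upto[OF u])
  also have "\<dots> = \<zeta>^weight a0 j * u$j + \<zeta>^N * excess_coeff u j d"
    unfolding N_def using d_pos by (subst sum_atMost_two_monomials) (auto simp: mult.commute)
  finally have "cmod (slice u j \<zeta> - \<zeta>^weight a0 j * u$j - \<zeta>^N * excess_coeff u j d)
      = cmod (slice u j \<zeta> - (\<Sum>i\<le>N. taylor_coeff (slice u j) i * \<zeta>^i))" by (simp add: algebra_simps)
  also have "\<dots> \<le> 2 * 1 * (cmod \<zeta> / (1/2))^(Suc N)"
    by (rule taylor_remainder_bound[OF slice_holomorphic[OF u] slice_bounded[OF u]]) (use \<zeta> in auto)
  also have "\<dots> = 2^(N + 2) * cmod \<zeta> * cmod \<zeta> ^ N"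
    by (simp add: power_mult_distrib mult_ac)
  finally show ?thesis unfolding N_def .
qed

text \<open>The coefficient \<open>excess_coeff u j d\<close> is a uniform limit of difference quotients of \<open>S\<close>.\<close>

lemma excess_coeff_continuous: "continuous_on (LL a0) (\<lambda>u. excess_coeff u j d)"
proof (rule uniform_limit_theorem)
  define N where "N = d + weight a0 j"
  define t :: "nat \<Rightarrow> complex" where "t n = of_real (1 / (real n + 4))" for n
  have t: "cmod (t n) = 1 / (real n + 4)" "t n \<noteq> 0" for n
    unfolding t_def norm_of_real of_real_eq_0_iff by simp_all
  define q where "q n u = (slice u j (t n) - t n^weight a0 j * u$j) / t n^N" for n u
  show "\<forall>\<^sub>F n in sequentially. continuous_on (LL a0) (q n)"
  proof (intro always_eventually allI)
    fix n
    have "wscale a0 (t n) ` LL a0 \<subseteq> LL a0" using t(1)[of n] by (auto intro: wscale_in_LL)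
    from continuous_on_compose2[OF holo_on_imp_continuous_on[OF holo]
        linear_continuous_on[OF bounded_linear_wscale] this]
    have "continuous_on (LL a0) (\<lambda>u. S (wscale a0 (t n) u))" .
    then show "continuous_on (LL a0) (q n)"
      unfolding q_def slice_def using t(2)[of n] by (intro continuous_intros) auto
  qed
  show "uniform_limit (LL a0) q (\<lambda>u. excess_coeff u j d) sequentially"
  proof (rule uniform_limitI)
    fix e :: real assume e: "e > 0"
    obtain n0 :: nat where n0: "2^(N + 2) / e < real n0" using reals_Archimedean2 by blast
    show "\<forall>\<^sub>F n in sequentially. \<forall>u\<in>LL a0. dist (q n u) (excess_coeff u j d) < e"
    proof (rule eventually_sequentiallyI[of n0], intro ballI)
      fix n u assume n: "n0 \<le> n" and u: "u \<in> LL a0"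
      have "q n u - excess_coeff u j d
          = (slice u j (t n) - t n^weight a0 j * u$j - t n^N * excess_coeff u j d) / t n^N"
        unfolding q_def using t(2)[of n] by (simp add: field_simps)
      then have "dist (q n u) (excess_coeff u j d) \<le> 2^(N + 2) * cmod (t n)"
        using slice_remainder_bound[OF u, of "t n" j] t[of n]
        by (simp add: dist_norm norm_divide norm_power N_def pos_divide_le_eq)
      also have "\<dots> < e"
      proof -
        have "2^(N + 2) < e * real n0" using n0 e by (simp add: field_simps)
        also have "\<dots> \<le> e * (real n + 4)" using n e by (intro mult_left_mono) auto
        finally show ?thesis unfolding t(1) by (simp add: field_simps)
      qed
      finally show "dist (q n u) (excess_coeff u j d) < e" .
    qed
  qed
qed simp

lemma slice_remainder_tendsto:
  assumes in_LL: "eventually (\<lambda>\<zeta>. u \<zeta> \<in> LL a0) (at 0)"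
  shows "((\<lambda>\<zeta>. (slice (u \<zeta>) j \<zeta> - \<zeta>^weight a0 j * u \<zeta> $ j
      - \<zeta>^(d + weight a0 j) * excess_coeff (u \<zeta>) j d) / \<zeta>^(d + weight a0 j)) \<longlongrightarrow> 0) (at 0)"
proof (rule Lim_null_comparison)
  define N where "N = d + weight a0 j"
  show "((\<lambda>\<zeta>. 2^(N + 2) * cmod \<zeta>) \<longlongrightarrow> 0) (at 0)" by (auto intro!: tendsto_eq_intros)
  have "eventually (\<lambda>\<zeta>. \<zeta> \<noteq> 0 \<and> cmod \<zeta> \<le> 1/4) (at 0)"
    by (rule eventually_at_0I[of "1/4"]) auto
  with in_LL show "eventually (\<lambda>\<zeta>. norm ((slice (u \<zeta>) j \<zeta> - \<zeta>^weight a0 j * u \<zeta> $ j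
      - \<zeta>^(d + weight a0 j) * excess_coeff (u \<zeta>) j d) / \<zeta>^(d + weight a0 j)) \<le> 2^(N + 2) * cmod \<zeta>) (at 0)"
  proof eventually_elim
    case (elim \<zeta>)
    then show ?case using slice_remainder_bound[of "u \<zeta>" \<zeta> j] unfolding N_def
      by (simp add: norm_divide norm_power pos_divide_le_eq)
  qed
qed

lemma rescaled_funpow_tendsto:
  assumes expansion_k: "\<And>i. ((\<lambda>\<zeta>. ((S^^k) (wscale a0 \<zeta> w) $ i - \<zeta>^weight a0 i * w$i
      - of_nat k * \<zeta>^(d + weight a0 i) * excess_coeff w i d) / \<zeta>^(d + weight a0 i)) \<longlongrightarrow> 0) (at 0)"
  shows "((\<lambda>\<zeta>. wscale a0 (inverse \<zeta>) ((S^^k) (wscale a0 \<zeta> w))) \<longlongrightarrow> w) (at 0)"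
proof (rule vec_tendstoI)
  fix i
  define Q where "Q \<zeta> = ((S^^k) (wscale a0 \<zeta> w) $ i - \<zeta>^weight a0 i * w$i
      - of_nat k * \<zeta>^(d + weight a0 i) * excess_coeff w i d) / \<zeta>^(d + weight a0 i)" for \<zeta>
  have "((\<lambda>\<zeta>. w$i + \<zeta>^d * (of_nat k * excess_coeff w i d + Q \<zeta>))
      \<longlongrightarrow> w$i + 0^d * (of_nat k * excess_coeff w i d + 0)) (at 0)"
    unfolding Q_def by (intro tendsto_intros expansion_k)
  moreover have "(0::complex)^d = 0" using d_pos by (simp add: power_0_left)
  ultimately have "((\<lambda>\<zeta>. w$i + \<zeta>^d * (of_nat k * excess_coeff w i d + Q \<zeta>)) \<longlongrightarrow> w$i) (at 0)"
    by simp
  moreover have "eventually (\<lambda>\<zeta>. w$i + \<zeta>^d * (of_nat k * excess_coeff w i d + Q \<zeta>)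
      = wscale a0 (inverse \<zeta>) ((S^^k) (wscale a0 \<zeta> w)) $ i) (at 0)"
    by (rule eventually_at_0I[of 1]) (auto simp: Q_def field_simps power_add)
  ultimately show "((\<lambda>\<zeta>. wscale a0 (inverse \<zeta>) ((S^^k) (wscale a0 \<zeta> w)) $ i) \<longlongrightarrow> w $ i) (at 0)"
    by (rule Lim_transform_eventually)
qed

text \<open>Rescaling \<open>(S^^k) (wscale a0 \<zeta> w)\<close> back by \<open>inverse \<zeta>\<close> gives points \<open>u \<zeta> \<rightarrow> w\<close>; one more
  application of \<open>S\<close> then adds \<open>excess_coeff (u \<zeta>) j d \<approx> excess_coeff w j d\<close> at order
  \<open>d + weight a0 j\<close>.\<close>

lemma funpow_expansion:
  assumes w: "w \<in> LL a0"
  shows "((\<lambda>\<zeta>. ((S^^k) (wscale a0 \<zeta> w) $ j - \<zeta>^weight a0 j * w$j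
      - of_nat k * \<zeta>^(d + weight a0 j) * excess_coeff w j d) / \<zeta>^(d + weight a0 j)) \<longlongrightarrow> 0) (at 0)"
proof (induction k arbitrary: j)
  case 0
  then show ?case by simp
next
  case (Suc k)
  define N where "N = d + weight a0 j"
  define v where "v \<zeta> = (S^^k) (wscale a0 \<zeta> w)" for \<zeta>
  define u where "u \<zeta> = wscale a0 (inverse \<zeta>) (v \<zeta>)" for \<zeta>
  have u_lim: "(u \<longlongrightarrow> w) (at 0)"
    unfolding u_def v_def by (rule rescaled_funpow_tendsto[OF Suc.IH])
  have "isCont (\<lambda>u. excess_coeff u j d) w"
    using excess_coeff_continuous open_LL w continuous_on_eq_continuous_at by blast
  from isCont_tendsto_compose[OF this u_lim]
  have E_lim: "((\<lambda>\<zeta>. excess_coeff (u \<zeta>) j d - excess_coeff w j d) \<longlongrightarrow> 0) (at 0)"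
    by (simp add: LIM_zero)
  have u_LL: "eventually (\<lambda>\<zeta>. u \<zeta> \<in> LL a0) (at 0)"
    using u_lim open_LL w unfolding tendsto_def by blast
  define err_S where "err_S \<zeta> =
    (slice (u \<zeta>) j \<zeta> - \<zeta>^weight a0 j * u \<zeta> $ j - \<zeta>^N * excess_coeff (u \<zeta>) j d) / \<zeta>^N" for \<zeta>
  define err_k where "err_k \<zeta> =
    (v \<zeta> $ j - \<zeta>^weight a0 j * w$j - of_nat k * \<zeta>^N * excess_coeff w j d) / \<zeta>^N" for \<zeta>
  define err_E where "err_E \<zeta> = excess_coeff (u \<zeta>) j d - excess_coeff w j d" for \<zeta>
  from slice_remainder_tendsto[OF u_LL, of j]
  have "((\<lambda>\<zeta>. err_S \<zeta> + err_k \<zeta> + err_E \<zeta>) \<longlongrightarrow> 0 + 0 + 0) (at 0)"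
    unfolding err_S_def err_k_def err_E_def N_def v_def by (intro tendsto_add Suc.IH E_lim)
  moreover have "eventually (\<lambda>\<zeta>. err_S \<zeta> + err_k \<zeta> + err_E \<zeta> = ((S^^Suc k) (wscale a0 \<zeta> w) $ j
      - \<zeta>^weight a0 j * w$j - of_nat (Suc k) * \<zeta>^N * excess_coeff w j d) / \<zeta>^N) (at 0)"
  proof (rule eventually_at_0I[of 1])
    fix \<zeta> :: complex assume \<zeta>: "\<zeta> \<noteq> 0"
    have wu: "wscale a0 \<zeta> (u \<zeta>) = v \<zeta>" unfolding u_def using \<zeta> by simp
    have "slice (u \<zeta>) j \<zeta> = (S^^Suc k) (wscale a0 \<zeta> w) $ j" unfolding slice_def wu v_def by simp
    moreover have "\<zeta>^weight a0 j * u \<zeta> $ j = v \<zeta> $ j" by (simp add: wu[symmetric])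
    ultimately show "err_S \<zeta> + err_k \<zeta> + err_E \<zeta> = ((S^^Suc k) (wscale a0 \<zeta> w) $ j
      - \<zeta>^weight a0 j * w$j - of_nat (Suc k) * \<zeta>^N * excess_coeff w j d) / \<zeta>^N"
      unfolding err_S_def err_k_def err_E_def using \<zeta> by (simp add: field_simps)
  qed simp
  ultimately show ?case unfolding N_def by (simp add: Lim_transform_eventually)
qed

lemma excess_coeff_zero:
  assumes w: "w \<in> LL a0"
  shows "excess_coeff w j d = 0"
proof -
  define N where "N = d + weight a0 j"
  have bound: "of_nat k * cmod (excess_coeff w j d) \<le> 2^N" for k
  proof -
    define f where "f \<zeta> = (S^^k) (wscale a0 \<zeta> w) $ j" for \<zeta>
    have holo_k: "holo_on (S^^k) (LL a0)" and self_map_k: "(S^^k) ` LL a0 \<subseteq> LL a0"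
      using holo_on_funpow[OF holo self_map] funpow_image_subset[OF self_map] by blast+
    note f_props = LL_self_map_wscale_slice[OF holo_k self_map_k w, of j, folded f_def]
    define P where "P i = (if i = weight a0 j then w$j else if i = N then of_nat k * excess_coeff w j d else 0)"
      for i
    have "((\<lambda>\<zeta>. (f \<zeta> - (\<Sum>i\<le>N. P i * \<zeta>^i)) / \<zeta>^N) \<longlongrightarrow> 0) (at 0)"
      using funpow_expansion[OF w, of k j] d_pos unfolding f_def N_def P_def
      by (subst sum_atMost_two_monomials) (simp_all add: algebra_simps)
    from taylor_coeff_eq_if_little_o[OF f_props _ this, of N]
    have "taylor_coeff f N = of_nat k * excess_coeff w j d" using d_pos unfolding P_def N_def by simp
    moreover have "cmod (taylor_coeff f N) \<le> 1 / (1/2)^N"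
      by (rule taylor_coeff_bound[OF f_props]) auto
    ultimately show ?thesis by (simp add: norm_mult power_one_over)
  qed
  show ?thesis
  proof (rule ccontr)
    assume "excess_coeff w j d \<noteq> 0"
    then have "cmod (excess_coeff w j d) > 0" by simp
    then obtain k :: nat where "2^N < of_nat k * cmod (excess_coeff w j d)"
      using ex_less_of_nat_mult by blast
    then show False using bound[of k] by simp
  qed
qed

end

theorem identity:
  assumes w: "w \<in> LL a0"
  shows "S w = w"
proof (cases "\<exists>m u j. 1 \<le> m \<and> u \<in> LL a0 \<and> excess_coeff u j m \<noteq> 0")
  case False
  then show ?thesis using identity_if_no_excess[OF _ w] by blast
next
  case True
  define d where "d = (LEAST m. \<exists>u j. 1 \<le> m \<and> u \<in> LL a0 \<and> excess_coeff u j m \<noteq> 0)"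
  have "\<exists>u j. 1 \<le> d \<and> u \<in> LL a0 \<and> excess_coeff u j d \<noteq> 0"
    unfolding d_def using True by (rule LeastI_ex)
  then obtain u j where d: "1 \<le> d" "u \<in> LL a0" "excess_coeff u j d \<noteq> 0" by blast
  have "excess_coeff u j m = 0" if "u \<in> LL a0" "1 \<le> m" "m < d" for u j m
    using not_less_Least[of m "\<lambda>m. \<exists>u j. 1 \<le> m \<and> u \<in> LL a0 \<and> excess_coeff u j m \<noteq> 0"] that
    unfolding d_def by blast
  from excess_coeff_zero[OF d(1) this d(2)] d(3) show ?thesis by blast
qed

end

lemma (in LL_hyperplane_map) cartan_map_if_normal_deriv_1:
  assumes "normal_deriv a0 S = 1"
  shows "LL_cartan_map a0 S"
  using holo self_map wscale_expansion assms by unfold_locales simp_all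

section \<open>Automorphisms fixing the hyperplane\<close>

locale LL_automorphism_fixing_hyperplane =
  fixes a0 :: "'n::finite" and F G :: "complex^'n \<Rightarrow> complex^'n"
  assumes holo_F: "holo_on F (LL a0)" and F_self_map: "F ` LL a0 \<subseteq> LL a0"
    and holo_G: "holo_on G (LL a0)" and G_self_map: "G ` LL a0 \<subseteq> LL a0"
    and G_F: "\<And>z. z \<in> LL a0 \<Longrightarrow> G (F z) = z" and F_G: "\<And>z. z \<in> LL a0 \<Longrightarrow> F (G z) = z"
    and F_fixes_hyperplane: "\<And>y. y \<in> LL a0 \<Longrightarrow> y$a0 = 0 \<Longrightarrow> F y = y"
begin

lemma G_fixes_hyperplane: "y \<in> LL a0 \<Longrightarrow> y$a0 = 0 \<Longrightarrow> G y = y"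
  using F_fixes_hyperplane G_F by metis

sublocale F: LL_hyperplane_map a0 F
  using holo_F F_self_map F_fixes_hyperplane by unfold_locales

sublocale G: LL_hyperplane_map a0 G
  using holo_G G_self_map G_fixes_hyperplane by unfold_locales

lemma inverse_automorphism: "LL_automorphism_fixing_hyperplane a0 G F"
  using holo_F F_self_map holo_G G_self_map G_F F_G G_fixes_hyperplane by unfold_locales

lemma derivs_at_0:
  obtains F' G' where "(F has_derivative F') (at 0)" "\<forall>c v. F' (c *s v) = c *s F' v"
    "(G has_derivative G') (at 0)" "\<forall>c v. G' (c *s v) = c *s G' v" "\<And>x. G' (F' x) = x"
proof -
  obtain F' where F': "(F has_derivative F') (at 0)" "\<forall>c v. F' (c *s v) = c *s F' v"
    using holo_F zero_in_LL unfolding holo_on_def by blast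
  obtain G' where G': "(G has_derivative G') (at 0)" "\<forall>c v. G' (c *s v) = c *s G' v"
    using holo_G zero_in_LL unfolding holo_on_def by blast
  have "((\<lambda>x. G (F x)) has_derivative (\<lambda>x. G' (F' x))) (at 0)"
    using diff_chain_at[OF F'(1), of G G'] G'(1) by (simp add: o_def)
  moreover have "((\<lambda>x. G (F x)) has_derivative (\<lambda>x. x)) (at 0)"
    by (rule has_derivative_transform_within_open[OF has_derivative_ident open_LL[of a0] zero_in_LL[of a0]])
      (simp add: G_F)
  ultimately have "G' (F' x) = x" for x using has_derivative_unique by metis
  then show ?thesis using that[OF F' G'] by blast
qed

lemma normal_deriv_G_mult_F: "normal_deriv a0 G * normal_deriv a0 F = 1"
proof -
  obtain F' G' where F': "(F has_derivative F') (at 0)" "\<forall>c v. F' (c *s v) = c *s F' v"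
    and G': "(G has_derivative G') (at 0)" "\<forall>c v. G' (c *s v) = c *s G' v"
    and G'_F': "\<And>x. G' (F' x) = x"
    by (rule derivs_at_0) blast
  have "1 = G' (F' (axis a0 1)) $ a0" by (simp add: G'_F')
  also have "\<dots> = normal_deriv a0 G * normal_deriv a0 F"
    by (simp add: G.deriv_nth_a0[OF G'] F.deriv_nth_a0[OF F'])
  finally show ?thesis by simp
qed

definition rot_commutator :: "complex \<Rightarrow> complex^'n \<Rightarrow> complex^'n" where
  "rot_commutator c x = wscale a0 (inverse c) (G (wscale a0 c (F x)))"

context
  fixes c :: complex
  assumes c: "cmod c = 1"
begin

lemma wscale_unimodular_self_map:
  "wscale a0 c ` LL a0 \<subseteq> LL a0" "wscale a0 (inverse c) ` LL a0 \<subseteq> LL a0"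
  using c by (auto intro!: wscale_in_LL simp: norm_inverse)

lemma rot_commutator_hyperplane_map: "LL_hyperplane_map a0 (rot_commutator c)"
proof
  have RF: "(\<lambda>x. wscale a0 c (F x)) ` LL a0 \<subseteq> LL a0"
    using F_self_map wscale_unimodular_self_map(1) by blast
  have "holo_on (\<lambda>x. G (wscale a0 c (F x))) (LL a0)"
    by (rule holo_on_compose[OF holo_on_compose[OF holo_F holo_on_wscale F_self_map] holo_G RF])
  from holo_on_compose[OF this holo_on_wscale subset_UNIV]
  show "holo_on (rot_commutator c) (LL a0)" unfolding rot_commutator_def .
  show "rot_commutator c ` LL a0 \<subseteq> LL a0"
    using RF G_self_map wscale_unimodular_self_map(2) unfolding rot_commutator_def by blast
  fix y assume y: "y \<in> LL a0" "y$a0 = 0"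
  then have "wscale a0 c y \<in> LL a0" "wscale a0 c y $ a0 = 0"
    using wscale_unimodular_self_map(1) by auto
  then show "rot_commutator c y = y"
    unfolding rot_commutator_def using y c F_fixes_hyperplane G_fixes_hyperplane
    by (metis norm_zero wscale_inverse(2) zero_neq_one)
qed

lemma normal_deriv_rot_commutator: "normal_deriv a0 (rot_commutator c) = 1"
proof -
  obtain F' G' where F': "(F has_derivative F') (at 0)" "\<forall>c v. F' (c *s v) = c *s F' v"
    and G': "(G has_derivative G') (at 0)" "\<forall>c v. G' (c *s v) = c *s G' v"
    by (rule derivs_at_0)
  have R: "\<And>c' x. (wscale a0 c' has_derivative wscale a0 c') (at x)"
    by (rule bounded_linear_imp_has_derivative[OF bounded_linear_wscale])
  have "((\<lambda>x. wscale a0 c (F x)) has_derivative (\<lambda>x. wscale a0 c (F' x))) (at 0)"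
    using diff_chain_at[OF F'(1) R] by (simp add: o_def)
  from diff_chain_at[OF this, of G G'] G'(1)
  have "((\<lambda>x. G (wscale a0 c (F x))) has_derivative (\<lambda>x. G' (wscale a0 c (F' x)))) (at 0)"
    by (simp add: o_def)
  from diff_chain_at[OF this R]
  have "(rot_commutator c has_derivative (\<lambda>x. wscale a0 (inverse c) (G' (wscale a0 c (F' x))))) (at 0)"
    unfolding rot_commutator_def[abs_def] by (simp add: o_def)
  then have "normal_deriv a0 (rot_commutator c) = wscale a0 (inverse c) (G' (wscale a0 c (F' (axis a0 1)))) $ a0"
    by (rule normal_deriv_eq) (simp add: F'(2) G'(2) wscale_smult)
  also have "\<dots> = normal_deriv a0 G * normal_deriv a0 F"
    using c by (auto simp: G.deriv_nth_a0[OF G'] F.deriv_nth_a0[OF F'] weight_def power_inverse field_simps)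
  also have "\<dots> = 1" by (rule normal_deriv_G_mult_F)
  finally show ?thesis .
qed

lemma rot_commutator_eq_id: "w \<in> LL a0 \<Longrightarrow> rot_commutator c w = w"
  using LL_hyperplane_map.cartan_map_if_normal_deriv_1[OF rot_commutator_hyperplane_map
      normal_deriv_rot_commutator]
  by (rule LL_cartan_map.identity)

lemma F_wscale_commute:
  assumes w: "w \<in> LL a0"
  shows "F (wscale a0 c w) = wscale a0 c (F w)"
proof -
  have "G (wscale a0 c (F w)) = wscale a0 c w"
    using rot_commutator_eq_id[OF w] c unfolding rot_commutator_def
    by (metis norm_zero wscale_inverse(1) zero_neq_one)
  moreover have "wscale a0 c (F w) \<in> LL a0" using w F_self_map wscale_unimodular_self_map(1) by blast
  ultimately show ?thesis using F_G by metis
qed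

end

lemma F_eq_normal_stretch:
  assumes w: "w \<in> LL a0"
  shows "F w = normal_stretch a0 (normal_deriv a0 F) w"
proof -
  obtain \<rho> where \<rho>: "\<rho> > 1" "\<And>c. cmod c < \<rho> \<Longrightarrow> wscale a0 c w \<in> LL a0"
    using wscale_disc_in_LL[OF w] by blast
  have "F w $ j = normal_stretch a0 (normal_deriv a0 F) w $ j" for j
  proof -
    define f where "f \<zeta> = F (wscale a0 \<zeta> w) $ j" for \<zeta>
    have "f holomorphic_on ball 0 \<rho>"
      unfolding f_def by (rule holomorphic_on_wscale_slice[OF holo_F]) (use \<rho> in auto)
    moreover have "f (c * \<zeta>) = c^weight a0 j * f \<zeta>" if "cmod c = 1" "\<zeta> \<in> ball 0 \<rho>" for c \<zeta>
      using F_wscale_commute[OF that(1) \<rho>(2), of \<zeta>] that(2) unfolding f_def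
      by (simp add: wscale_mult[symmetric])
    moreover have "(\<lambda>\<zeta>. (f \<zeta> - \<zeta>^weight a0 j * normal_stretch a0 (normal_deriv a0 F) w $ j)
        / \<zeta>^weight a0 j) \<midarrow>0\<rightarrow> 0"
      unfolding f_def by (rule F.wscale_expansion)
    ultimately have "f 1 = normal_stretch a0 (normal_deriv a0 F) w $ j * 1^weight a0 j"
      using \<rho>(1) by (intro homogeneous_holomorphic_eq_monomial) auto
    then show ?thesis unfolding f_def by simp
  qed
  then show ?thesis by (simp add: vec_eq_iff)
qed

lemma normal_stretch_self_map:
  assumes w: "w \<in> LL a0"
  shows "normal_stretch a0 (normal_deriv a0 F) w \<in> LL a0"
proof -
  have "F w \<in> LL a0" using w F_self_map by blast
  then show ?thesis by (simp only: F_eq_normal_stretch[OF w])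
qed

lemma norm_normal_deriv_F_le_1: "cmod (normal_deriv a0 F) \<le> 1"
  by (rule norm_le_1_if_normal_stretch_self_map[OF normal_stretch_self_map])

lemma norm_normal_deriv_F: "cmod (normal_deriv a0 F) = 1"
proof -
  interpret inverse: LL_automorphism_fixing_hyperplane a0 G F by (rule inverse_automorphism)
  have "cmod (normal_deriv a0 G) * cmod (normal_deriv a0 F) = 1"
    using normal_deriv_G_mult_F by (metis norm_mult norm_one)
  moreover have "cmod (normal_deriv a0 G) * cmod (normal_deriv a0 F) \<le> 1 * cmod (normal_deriv a0 F)"
    using inverse.norm_normal_deriv_F_le_1 by (intro mult_right_mono) auto
  ultimately show ?thesis using norm_normal_deriv_F_le_1 by linarith
qed

lemma normal_deriv_F_eq_1: "j1 \<noteq> a0 \<Longrightarrow> normal_deriv a0 F = 1"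
  by (rule eq_1_if_normal_stretch_self_map[OF _ norm_normal_deriv_F normal_stretch_self_map])

theorem identity:
  assumes "j1 \<noteq> a0" "w \<in> LL a0"
  shows "F w = w"
  using F_eq_normal_stretch[OF assms(2)] normal_deriv_F_eq_1[OF assms(1)] by simp

end

theorem lemma5p5:
  fixes a0 :: "'n::finite" and F :: "complex^'n \<Rightarrow> complex^'n"
  assumes "CARD('n) \<ge> 2"
    and "F \<in> Aut (LL a0)"
    and "\<forall>z. z$a0 = 0 \<and> z \<in> Lset_on (- {a0}) \<longrightarrow> F z = z"
  shows "\<forall>z\<in>LL a0. F z = z"
proof -
  obtain G where G: "holo_on F (LL a0)" "F ` LL a0 \<subseteq> LL a0" "holo_on G (LL a0)" "G ` LL a0 \<subseteq> LL a0"
    "\<forall>z\<in>LL a0. G (F z) = z \<and> F (G z) = z"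
    using assms(2) unfolding Aut_def by blast
  interpret LL_automorphism_fixing_hyperplane a0 F G
  proof
    show "F y = y" if "y \<in> LL a0" "y$a0 = 0" for y
      using assms(3) that LL_hyperplane_iff by blast
  qed (use G in auto)
  have "\<exists>j1::'n. j1 \<noteq> a0"
  proof (rule ccontr)
    assume "\<nexists>j1::'n. j1 \<noteq> a0"
    then have "(UNIV :: 'n set) = {a0}" by auto
    then have "CARD('n) = 1" by (metis One_nat_def card_1_singleton_iff)
    then show False using assms(1) by simp
  qed
  then obtain j1 :: 'n where "j1 \<noteq> a0" by blast
  then show ?thesis using identity by blast
qed

end
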